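(* Let $N\ge3$ and $m>2-\frac2N$. For every $M>0$ there exists a unique $\alpha=\alpha(M)>0$ such that the Lane–Emden solution $\psi$ with $\psi(0)=\alpha$ satisfies $$\omega_{N-1}\int_0^{R_*(\alpha)}\psi^{\frac{1}{m-1}}(s)\,s^{N-1}\,ds=M.$$
   Context: $\omega_{N-1}$ is the area of the unit sphere $S^{N-1}\subset\mathbb{R}^N$. For $\alpha>0$, $\psi$ denotes the unique solution of $\psi''+\frac{N-1}{r}\psi'=-\frac{m-1}{m}\psi^{1/(m-1)}$, $\psi(0)=\alpha$, $\psi'(0)=0$, positive and decreasing on $(0,R_*(\alpha))$, where $R_*(\alpha)\in(0,\infty)$ is the first zero of $\psi$ (the maximal radius on which the positive solution exists). *)

theory Defs
  imports "HOL-Analysis.Analysis"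
begin

definition sphere_area :: "nat \<Rightarrow> real" where
  "sphere_area N = 2 * pi powr (real N / 2) / Gamma (real N / 2)"

text \<open>psi is the Lane-Emden solution on [0,R] with psi(0)=alpha, psi'(0)=0,
  positive on [0,R) and with first zero R (so R = R_*(alpha)).\<close>
definition LE_solution :: "nat \<Rightarrow> real \<Rightarrow> real \<Rightarrow> real \<Rightarrow> (real \<Rightarrow> real) \<Rightarrow> bool" where
  "LE_solution N m \<alpha> R \<psi> \<longleftrightarrow>
     0 < R \<and> \<psi> 0 = \<alpha> \<and> continuous_on {0..R} \<psi> \<and>
     (\<psi> has_real_derivative 0) (at 0 within {0..R}) \<and>
     (\<exists>\<psi>'. \<forall>r\<in>{0<..<R}.
        (\<psi> has_real_derivative \<psi>' r) (at r) \<and>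
        (\<psi>' has_real_derivative
            (- ((m - 1) / m) * \<psi> r powr (1 / (m - 1)) - (real N - 1) / r * \<psi>' r)) (at r)) \<and>
     (\<forall>r\<in>{0..<R}. 0 < \<psi> r) \<and> \<psi> R = 0"

end

theory Submission
  imports Defs
begin

text \<open>With \<open>c = (m - 1)/m\<close> and \<open>p = 1/(m - 1)\<close>, the scaling \<open>\<psi> \<mapsto> \<alpha> \<psi>(\<alpha>\<^sup>(\<^sup>p\<^sup>-\<^sup>1\<^sup>)\<^sup>/\<^sup>2 r)\<close> maps the solution
  with \<open>\<psi>(0) = 1\<close> to the one with \<open>\<psi>(0) = \<alpha>\<close> and multiplies the mass by \<open>\<alpha>\<^sup>p\<^sup>-\<^sup>N\<^sup>(\<^sup>p\<^sup>-\<^sup>1\<^sup>)\<^sup>/\<^sup>2\<close>. The exponent is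
  positive exactly when \<open>m > 2 - 2/N\<close>, i.e. \<open>p < N/(N - 2)\<close>, so the mass is a bijection from \<open>\<alpha> > 0\<close> onto
  \<open>(0, \<infinity>)\<close>, once the solution with \<open>\<psi>(0) = 1\<close> exists and is unique.

  Uniqueness follows from the first integral \<open>r\<^sup>N\<^sup>-\<^sup>1 \<psi>' = -c \<integral>\<^sub>0\<^sup>r t\<^sup>N\<^sup>-\<^sup>1 \<psi>\<^sup>p\<close> and Gronwall's lemma. For
  existence, the integral equation with the nonlinearity truncated below at a level \<open>\<epsilon>\<close> is solved by
  Banach's fixed point theorem, up to the radius where the solution reaches \<open>\<epsilon>\<close>. As \<open>\<epsilon> \<rightarrow> 0\<close> these solutions
  exhaust an interval \<open>[0, R\<^sub>*)\<close>, and \<open>R\<^sub>*\<close> is finite: a positive solution on all of \<open>[0, \<infinity>)\<close> would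
  decay no faster than \<open>r\<^sup>2\<^sup>-\<^sup>N\<close>, while for \<open>1 < s < N/(N - 2)\<close> its power \<open>\<psi>\<^sup>1\<^sup>-\<^sup>s\<close> grows at least like \<open>r\<^sup>2\<close>.\<close>

section \<open>Elementary real analysis\<close>

lemma has_integral_power_0:
  fixes r :: real
  assumes "0 \<le> r"
  shows "((\<lambda>t. t ^ k) has_integral r ^ Suc k / real (Suc k)) {0..r}"
proof -
  have "((\<lambda>t. t ^ Suc k / real (Suc k)) has_real_derivative t ^ k) (at t within {0..r})" for t
    using DERIV_cdivide[OF DERIV_pow[of "Suc k" t "{0..r}"], of "real (Suc k)"] by simp
  then show ?thesis
    using fundamental_theorem_of_calculus[of 0 r "\<lambda>t. t ^ Suc k / real (Suc k)" "\<lambda>t. t ^ k"] assms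
    by (simp add: has_real_derivative_iff_has_vector_derivative)
qed

lemma integral_power_weight_ge:
  fixes g :: "real \<Rightarrow> real"
  assumes g: "continuous_on {0..r} g" and "0 \<le> r" "1 \<le> N" and ge: "\<And>t. t \<in> {0..r} \<Longrightarrow> \<kappa> \<le> g t"
  shows "\<kappa> * r ^ N / real N \<le> integral {0..r} (\<lambda>t. t ^ (N - 1) * g t)"
proof -
  have "((\<lambda>t. \<kappa> * t ^ (N - 1)) has_integral \<kappa> * (r ^ N / real N)) {0..r}"
    using has_integral_mult_right[OF has_integral_power_0[OF \<open>0 \<le> r\<close>, of "N - 1"]] \<open>1 \<le> N\<close> by simp
  then have "\<kappa> * (r ^ N / real N) \<le> integral {0..r} (\<lambda>t. t ^ (N - 1) * g t)"
  proof (rule has_integral_le)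
    show "((\<lambda>t. t ^ (N - 1) * g t) has_integral integral {0..r} (\<lambda>t. t ^ (N - 1) * g t)) {0..r}"
      by (intro integrable_integral integrable_continuous_interval continuous_intros g)
  qed (use ge in \<open>auto simp: mult.commute mult_right_mono\<close>)
  then show ?thesis by simp
qed

lemma integral_rescale_0:
  fixes F :: "real \<Rightarrow> real"
  assumes "continuous_on {0..R} F" "0 < \<mu>"
  shows "integral {0..R / \<mu>} (\<lambda>x. F (\<mu> * x)) = integral {0..R} F / \<mu>"
proof -
  have "(F has_integral integral {0..R} F) (cbox 0 R)"
    using integrable_continuous_interval[OF assms(1)] by auto
  then have "((\<lambda>x. F (\<mu> *\<^sub>R x + 0)) has_integral (1 / \<bar>\<mu>\<bar> ^ DIM(real)) *\<^sub>R integral {0..R} F)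
      ((\<lambda>x. (1 / \<mu>) *\<^sub>R x + - ((1 / \<mu>) *\<^sub>R 0)) ` cbox 0 R)"
    by (rule has_integral_affinity) (use assms in auto)
  moreover have "(\<lambda>x. (1 / \<mu>) *\<^sub>R x + - ((1 / \<mu>) *\<^sub>R 0)) ` cbox 0 R = {0..R / \<mu>}"
    using image_mult_atLeastAtMost[of "1 / \<mu>" 0 R] assms by simp
  ultimately show ?thesis using assms by (simp add: integral_unique)
qed

lemma integral_times_exp_square:
  fixes K r :: real
  assumes "0 < K" "0 \<le> r"
  shows "integral {0..r} (\<lambda>t. t * exp (K * t\<^sup>2)) = (exp (K * r\<^sup>2) - 1) / (2 * K)"
proof -
  have "((\<lambda>t. exp (K * t\<^sup>2) / (2 * K)) has_real_derivative t * exp (K * t\<^sup>2)) (at t within {0..r})" for t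
    using assms by (auto intro!: derivative_eq_intros simp: field_simps)
  then have "((\<lambda>t. t * exp (K * t\<^sup>2)) has_integral (exp (K * r\<^sup>2) / (2 * K) - exp (K * 0\<^sup>2) / (2 * K))) {0..r}"
    using assms by (intro fundamental_theorem_of_calculus) (auto simp: has_real_derivative_iff_has_vector_derivative)
  then show ?thesis by (simp add: integral_unique diff_divide_distrib)
qed

lemma integral_Icc_mono_right:
  fixes f :: "real \<Rightarrow> real"
  assumes "continuous_on {a..c} f" "\<And>t. t \<in> {b..c} \<Longrightarrow> 0 \<le> f t" "a \<le> b" "b \<le> c"
  shows "integral {a..b} f \<le> integral {a..c} f"
proof -
  have "integral {a..b} f + integral {b..c} f = integral {a..c} f"
    using Henstock_Kurzweil_Integration.integral_combine[of a b c f] assms integrable_continuous_interval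
    by blast
  moreover have "0 \<le> integral {b..c} f"
    using assms continuous_on_subset[OF assms(1), of "{b..c}"]
    by (intro integral_nonneg integrable_continuous_interval) auto
  ultimately show ?thesis by linarith
qed

lemma abs_powr_diff_le:
  fixes x y d A p :: real
  assumes "0 < d" "d \<le> x" "x \<le> A" "d \<le> y" "y \<le> A" "0 < p"
  shows "\<bar>x powr p - y powr p\<bar> \<le> p * (d powr (p - 1) + A powr (p - 1)) * \<bar>x - y\<bar>"
proof -
  have bound: "z powr (p - 1) \<le> d powr (p - 1) + A powr (p - 1)" if "d \<le> z" "z \<le> A" for z
  proof (cases "0 \<le> p - 1")
    case True
    then have "z powr (p - 1) \<le> A powr (p - 1)" using that assms by (intro powr_mono2) auto
    then show ?thesis by (smt (verit) powr_ge_zero)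
  next
    case False
    then have "z powr (p - 1) \<le> d powr (p - 1)" using that assms by (intro powr_mono2') auto
    then show ?thesis by (smt (verit) powr_ge_zero)
  qed
  have ordered: "\<bar>u powr p - v powr p\<bar> \<le> p * (d powr (p - 1) + A powr (p - 1)) * \<bar>u - v\<bar>"
    if uv: "d \<le> v" "v < u" "u \<le> A" for u v
  proof -
    obtain z where z: "v < z" "z < u" and eq: "u powr p - v powr p = (u - v) * (p * z powr (p - 1))"
      using MVT2[of v u "\<lambda>z. z powr p" "\<lambda>z. p * z powr (p - 1)"] uv assms
      by (metis has_real_derivative_powr less_le_trans order.strict_trans1)
    have "\<bar>u powr p - v powr p\<bar> = (u - v) * (p * z powr (p - 1))"
      using eq uv assms by (simp add: abs_of_nonneg)
    also have "\<dots> \<le> (u - v) * (p * (d powr (p - 1) + A powr (p - 1)))"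
      using bound[of z] z uv assms by (intro mult_left_mono) auto
    finally show ?thesis using uv by (simp add: ac_simps)
  qed
  consider "x = y" | "y < x" | "x < y" by linarith
  then show ?thesis
  proof cases
    case 2
    then show ?thesis using ordered[of y x] assms by auto
  next
    case 3
    then show ?thesis using ordered[of x y] assms by (auto simp: abs_minus_commute)
  qed simp
qed

text \<open>Mean value theorem on \<open>[t/2, t]\<close> for a small \<open>t\<close> at which both difference quotients at \<open>0\<close> are small.\<close>
lemma small_derivative_near_0:
  fixes f f' :: "real \<Rightarrow> real"
  assumes cont: "continuous_on {0..b} f" and f0: "(f has_real_derivative 0) (at 0 within {0..b})"
    and f': "\<And>r. r \<in> {0<..<b} \<Longrightarrow> (f has_real_derivative f' r) (at r)"
    and "0 < b" "0 < e" "0 < d"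
  shows "\<exists>z\<in>{0<..<min d b}. \<bar>f' z\<bar> \<le> e"
proof -
  from f0 have "((\<lambda>y. (f y - f 0) / (y - 0)) \<longlongrightarrow> 0) (at 0 within {0..b})"
    by (simp add: has_field_derivative_iff)
  then have "eventually (\<lambda>y. dist ((f y - f 0) / (y - 0)) 0 < e / 3) (at 0 within {0..b})"
    using \<open>0 < e\<close> by (intro tendstoD) auto
  then obtain d' where "d' > 0" and quot: "\<And>y. y \<in> {0..b} \<Longrightarrow> y \<noteq> 0 \<Longrightarrow> \<bar>y\<bar> < d' \<Longrightarrow> \<bar>f y - f 0\<bar> < e / 3 * \<bar>y\<bar>"
    unfolding eventually_at by (auto simp: dist_real_def abs_divide divide_less_eq)
  define t where "t = min (min d d') b / 2"
  have t: "0 < t" "t < d" "t < d'" "t < b" unfolding t_def using assms \<open>d' > 0\<close> by auto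
  have "\<exists>l z. t/2 < z \<and> z < t \<and> (f has_real_derivative l) (at z) \<and> f t - f (t/2) = (t - t/2) * l"
  proof (rule MVT)
    show "continuous_on {t/2..t} f" using t by (intro continuous_on_subset[OF cont]) auto
    fix x assume "t/2 < x" "x < t"
    then show "f differentiable (at x)" using f'[of x] t real_differentiable_def by auto
  qed (use t in auto)
  then obtain l z where z: "t/2 < z" "z < t" and "(f has_real_derivative l) (at z)"
    and mvt: "f t - f (t/2) = (t - t/2) * l"
    by blast
  then have "l = f' z" using f'[of z] t DERIV_unique by auto
  have "\<bar>f t - f 0\<bar> < e / 3 * t" "\<bar>f (t/2) - f 0\<bar> < e / 3 * (t/2)"
    using quot[of t] quot[of "t/2"] t by auto
  then have "\<bar>f t - f (t/2)\<bar> < e / 3 * t + e / 3 * (t/2)" by (simp only: abs_less_iff) linarith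
  then have "t/2 * \<bar>l\<bar> < t/2 * e" using mvt t by (simp add: abs_mult algebra_simps)
  then have "\<bar>f' z\<bar> \<le> e" using \<open>l = f' z\<close> t by simp
  then show ?thesis using z t by auto
qed

lemma quadratic_decrease_from_derivative:
  fixes u D :: "real \<Rightarrow> real"
  assumes cont: "continuous_on {0..A} u" and "0 \<le> A"
    and deriv: "\<And>x. x \<in> {0<..<A} \<Longrightarrow> (u has_real_derivative D x) (at x)"
    and bound: "\<And>x. x \<in> {0<..<A} \<Longrightarrow> D x \<le> - \<kappa> * x"
  shows "u A \<le> u 0 - \<kappa> * A\<^sup>2 / 2"
proof -
  have "u A + \<kappa> * A\<^sup>2 / 2 \<le> u 0 + \<kappa> * 0\<^sup>2 / 2"
  proof (rule DERIV_nonpos_imp_decreasing_open[of 0 A "\<lambda>x. u x + \<kappa> * x\<^sup>2 / 2"])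
    fix x assume x: "0 < x" "x < A"
    show "\<exists>y. ((\<lambda>x. u x + \<kappa> * x\<^sup>2 / 2) has_real_derivative y) (at x) \<and> y \<le> 0"
    proof (intro exI conjI)
      show "((\<lambda>x. u x + \<kappa> * x\<^sup>2 / 2) has_real_derivative D x + \<kappa> * x) (at x)"
        using deriv[of x] x by (auto intro!: derivative_eq_intros)
      show "D x + \<kappa> * x \<le> 0" using bound[of x] x by simp
    qed
  qed (use assms in \<open>auto intro!: continuous_intros\<close>)
  then show ?thesis by simp
qed

lemma gronwall_zero:
  fixes I D :: "real \<Rightarrow> real"
  assumes cont: "continuous_on {0..b} I" and I0: "I 0 = 0" and nonneg: "\<And>r. r \<in> {0..b} \<Longrightarrow> 0 \<le> I r"
    and deriv: "\<And>r. r \<in> {0<..<b} \<Longrightarrow> (I has_real_derivative D r) (at r)"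
    and bound: "\<And>r. r \<in> {0<..<b} \<Longrightarrow> D r \<le> C * I r"
    and r: "r \<in> {0..b}"
  shows "I r = 0"
proof -
  define J where "J s = exp (- C * s) * I s" for s
  have "J r \<le> J 0"
  proof (rule DERIV_nonpos_imp_decreasing_open[of 0 r J])
    show "continuous_on {0..r} J"
      unfolding J_def using r by (intro continuous_intros continuous_on_subset[OF cont]) auto
    fix s assume s: "0 < s" "s < r"
    then have "s \<in> {0<..<b}" using r by auto
    show "\<exists>y. (J has_real_derivative y) (at s) \<and> y \<le> 0"
    proof (intro exI conjI)
      show "(J has_real_derivative exp (- C * s) * (D s - C * I s)) (at s)"
        unfolding J_def using deriv[OF \<open>s \<in> _\<close>]
        by (auto intro!: derivative_eq_intros simp: algebra_simps)
      show "exp (- C * s) * (D s - C * I s) \<le> 0"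
        using bound[OF \<open>s \<in> _\<close>] by (simp add: mult_nonneg_nonpos)
    qed
  qed (use r in auto)
  then show ?thesis using nonneg[OF r] I0 by (simp add: J_def mult_le_0_iff)
qed

text \<open>Gronwall's argument for \<open>I(r) = \<integral>\<^sub>0\<^sup>r |w|\<close>: by the mean value theorem \<open>|w r| \<le> b K I(r)\<close>, i.e. \<open>I' \<le> b K I\<close>.\<close>
lemma zero_if_derivative_bounded_by_integral:
  fixes w w' :: "real \<Rightarrow> real"
  assumes cont: "continuous_on {0..b} w" and w0: "w 0 = 0" and K: "0 \<le> K"
    and deriv: "\<And>r. r \<in> {0<..<b} \<Longrightarrow> (w has_real_derivative w' r) (at r)"
    and bound: "\<And>r. r \<in> {0<..<b} \<Longrightarrow> \<bar>w' r\<bar> \<le> K * integral {0..r} (\<lambda>t. \<bar>w t\<bar>)"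
    and r: "r \<in> {0..b}"
  shows "w r = 0"
proof -
  define I where "I r = integral {0..r} (\<lambda>t. \<bar>w t\<bar>)" for r
  have cont_abs: "continuous_on {0..\<xi>} (\<lambda>t. \<bar>w t\<bar>)" if "\<xi> \<le> b" for \<xi>
    using that by (intro continuous_intros continuous_on_subset[OF cont]) auto
  have I_nonneg: "0 \<le> I x" if "0 \<le> x" "x \<le> b" for x
    unfolding I_def using that by (intro integral_nonneg integrable_continuous_interval cont_abs) auto
  have I_mono: "I x \<le> I y" if "0 \<le> x" "x \<le> y" "y \<le> b" for x y
    unfolding I_def using that by (intro integral_Icc_mono_right cont_abs) auto
  have w_bound: "\<bar>w r\<bar> \<le> b * K * I r" if r: "r \<in> {0<..b}" for r
  proof -
    have "\<exists>l z. 0 < z \<and> z < r \<and> (w has_real_derivative l) (at z) \<and> w r - w 0 = (r - 0) * l"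
    proof (rule MVT)
      show "continuous_on {0..r} w" using r by (intro continuous_on_subset[OF cont]) auto
      fix x assume "0 < x" "x < r"
      then show "w differentiable (at x)" using deriv[of x] r by (auto simp: real_differentiable_def)
    qed (use r in auto)
    then obtain l z where z: "0 < z" "z < r" and "(w has_real_derivative l) (at z)" and mvt: "w r = r * l"
      using w0 by auto
    then have "\<bar>l\<bar> \<le> K * I z" using bound[of z] deriv[of z] r DERIV_unique unfolding I_def by fastforce
    also have "\<dots> \<le> K * I r" using z r K by (intro mult_left_mono I_mono) auto
    finally have "r * \<bar>l\<bar> \<le> b * (K * I r)" using r I_nonneg[of r] K by (intro mult_mono) auto
    then show ?thesis using mvt r by (simp add: abs_mult ac_simps)
  qed
  have "I r = 0"
  proof (rule gronwall_zero[where I = I and D = "\<lambda>r. \<bar>w r\<bar>" and C = "b * K" and b = b])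
    show "continuous_on {0..b} I"
      unfolding I_def by (intro indefinite_integral_continuous_1 integrable_continuous_interval cont_abs) simp
    fix x assume x: "x \<in> {0<..<b}"
    then have "x \<in> interior {0..b}" by auto
    then show "(I has_real_derivative \<bar>w x\<bar>) (at x)"
      using integral_has_real_derivative[OF cont_abs[OF order_refl], of x] at_within_interior[of x "{0..b}"] x
      unfolding I_def by auto
    show "\<bar>w x\<bar> \<le> b * K * I x" using w_bound x by auto
  qed (use r I_nonneg in \<open>auto simp: I_def\<close>)
  then show ?thesis using w_bound[of r] w0 r K by (cases "r = 0") (auto simp: mult_nonneg_nonneg)
qed

text \<open>Otherwise \<open>f - a x\<^sup>-\<^sup>k\<close>, which is decreasing, would stay below a negative value while \<open>a x\<^sup>-\<^sup>k \<rightarrow> 0\<close>.\<close>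
lemma powr_decay_lower_bound:
  fixes f f' :: "real \<Rightarrow> real"
  assumes k: "0 < k" and r: "0 < r" and pos: "\<And>x. r \<le> x \<Longrightarrow> 0 < f x"
    and deriv: "\<And>x. r \<le> x \<Longrightarrow> (f has_real_derivative f' x) (at x)"
    and slope: "\<And>x. r \<le> x \<Longrightarrow> f' x \<le> - a * k * x powr (- k - 1)"
  shows "a * r powr - k \<le> f r"
proof (rule ccontr)
  assume "\<not> a * r powr - k \<le> f r"
  then have gap: "0 < a * r powr - k - f r" by simp
  define h where "h x = f x - a * x powr - k" for x
  have h_deriv: "(h has_real_derivative (f' x + a * k * x powr (- k - 1))) (at x)" if "r \<le> x" for x
    unfolding h_def using deriv[OF that] that r by (auto intro!: derivative_eq_intros simp: algebra_simps)
  have h_antimono: "h t \<le> h r" if t: "r \<le> t" for t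
  proof (rule DERIV_nonpos_imp_decreasing_open[of r t h])
    show "continuous_on {r..t} h"
    proof (rule DERIV_atLeastAtMost_imp_continuous_on)
      fix x assume "r \<le> x" "x \<le> t"
      then show "\<exists>y. (h has_real_derivative y) (at x)" using h_deriv[of x] by auto
    qed
    fix x assume "r < x" "x < t"
    then show "\<exists>y. (h has_real_derivative y) (at x) \<and> y \<le> 0"
      using h_deriv[of x] slope[of x] by (intro exI conjI) auto
  qed (use t in auto)
  have "((\<lambda>t. a * t powr - k) \<longlongrightarrow> 0) at_top"
    using tendsto_mult_right_zero[OF tendsto_neg_powr[OF _ filterlim_ident]] k by auto
  then have "eventually (\<lambda>t. a * t powr - k < a * r powr - k - f r) at_top"
    using gap by (rule order_tendstoD(2))
  then obtain T where "\<And>t. T \<le> t \<Longrightarrow> a * t powr - k < a * r powr - k - f r"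
    unfolding eventually_at_top_linorder by auto
  then have "h (max T r) \<le> h r" "a * max T r powr - k < a * r powr - k - f r"
    using h_antimono by auto
  then show False using pos[of "max T r"] unfolding h_def by linarith
qed

section \<open>Radial solutions of the Lane--Emden equation\<close>

definition lane_emden_ode :: "nat \<Rightarrow> real \<Rightarrow> real \<Rightarrow> real \<Rightarrow> (real \<Rightarrow> real) \<Rightarrow> bool" where
  "lane_emden_ode N c p b \<psi> \<longleftrightarrow>
     continuous_on {0..b} \<psi> \<and> (\<psi> has_real_derivative 0) (at 0 within {0..b}) \<and>
     (\<exists>\<psi>'. \<forall>r\<in>{0<..<b}.
        (\<psi> has_real_derivative \<psi>' r) (at r) \<and>
        (\<psi>' has_real_derivative (- c * \<psi> r powr p - (real N - 1) / r * \<psi>' r)) (at r))"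

definition lane_emden_positive_on :: "nat \<Rightarrow> real \<Rightarrow> real \<Rightarrow> real \<Rightarrow> real \<Rightarrow> (real \<Rightarrow> real) \<Rightarrow> bool" where
  "lane_emden_positive_on N c p \<alpha> b \<psi> \<longleftrightarrow>
     0 < b \<and> \<psi> 0 = \<alpha> \<and> lane_emden_ode N c p b \<psi> \<and> (\<forall>r\<in>{0..b}. 0 < \<psi> r)"

definition lane_emden_solution :: "nat \<Rightarrow> real \<Rightarrow> real \<Rightarrow> real \<Rightarrow> real \<Rightarrow> (real \<Rightarrow> real) \<Rightarrow> bool" where
  "lane_emden_solution N c p \<alpha> R \<psi> \<longleftrightarrow>
     0 < R \<and> \<psi> 0 = \<alpha> \<and> lane_emden_ode N c p R \<psi> \<and> (\<forall>r\<in>{0..<R}. 0 < \<psi> r) \<and> \<psi> R = 0"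

lemma LE_solution_iff:
  "LE_solution N m \<alpha> R \<psi> \<longleftrightarrow> lane_emden_solution N ((m - 1) / m) (1 / (m - 1)) \<alpha> R \<psi>"
  unfolding LE_solution_def lane_emden_solution_def lane_emden_ode_def by auto

definition radial_mass :: "nat \<Rightarrow> real \<Rightarrow> (real \<Rightarrow> real) \<Rightarrow> real \<Rightarrow> real" where
  "radial_mass N p \<psi> r = integral {0..r} (\<lambda>t. t ^ (N - 1) * \<psi> t powr p)"

lemma lane_emden_ode_subset:
  assumes "lane_emden_ode N c p b \<psi>" "b' \<le> b"
  shows "lane_emden_ode N c p b' \<psi>"
proof -
  from assms(1) obtain \<psi>' where cont: "continuous_on {0..b} \<psi>"
    and d0: "(\<psi> has_real_derivative 0) (at 0 within {0..b})"
    and d: "\<forall>r\<in>{0<..<b}. (\<psi> has_real_derivative \<psi>' r) (at r) \<and>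
        (\<psi>' has_real_derivative (- c * \<psi> r powr p - (real N - 1) / r * \<psi>' r)) (at r)"
    unfolding lane_emden_ode_def by blast
  have "continuous_on {0..b'} \<psi>" using cont by (rule continuous_on_subset) (use assms in auto)
  moreover have "(\<psi> has_real_derivative 0) (at 0 within {0..b'})"
    using d0 by (rule has_field_derivative_subset) (use assms in auto)
  ultimately show ?thesis
    unfolding lane_emden_ode_def using d assms(2) by (intro conjI exI[of _ \<psi>']) auto
qed

lemma lane_emden_ode_cong:
  assumes "lane_emden_ode N c p b \<psi>" "\<And>x. x \<in> {0..b} \<Longrightarrow> \<phi> x = \<psi> x"
  shows "lane_emden_ode N c p b \<phi>"
proof -
  from assms(1) obtain \<psi>' where cont: "continuous_on {0..b} \<psi>"
    and d0: "(\<psi> has_real_derivative 0) (at 0 within {0..b})"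
    and d: "\<forall>r\<in>{0<..<b}. (\<psi> has_real_derivative \<psi>' r) (at r) \<and>
        (\<psi>' has_real_derivative (- c * \<psi> r powr p - (real N - 1) / r * \<psi>' r)) (at r)"
    unfolding lane_emden_ode_def by blast
  have "continuous_on {0..b} \<phi>" using cont assms(2) continuous_on_cong by blast
  moreover have "(\<phi> has_real_derivative 0) (at 0 within {0..b})"
  proof (cases "0 \<le> b")
    case True
    show ?thesis
      by (rule has_field_derivative_transform_within[OF d0, of 1]) (use True assms(2) in auto)
  qed simp
  moreover have "(\<phi> has_real_derivative \<psi>' r) (at r)" if "r \<in> {0<..<b}" for r
    by (rule has_field_derivative_transform_within_open[where S = "{0<..<b}"])
      (use d that assms(2) in auto)
  ultimately show ?thesis
    unfolding lane_emden_ode_def using d assms(2) by (intro conjI exI[of _ \<psi>']) auto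
qed

lemma lane_emden_ode_deriv:
  assumes "lane_emden_ode N c p b \<psi>" "r \<in> {0<..<b}"
  shows "(\<psi> has_real_derivative deriv \<psi> r) (at r)"
    and "(deriv \<psi> has_real_derivative (- c * \<psi> r powr p - (real N - 1) / r * deriv \<psi> r)) (at r)"
proof -
  obtain \<psi>' where d: "\<And>r. r \<in> {0<..<b} \<Longrightarrow> (\<psi> has_real_derivative \<psi>' r) (at r) \<and>
      (\<psi>' has_real_derivative (- c * \<psi> r powr p - (real N - 1) / r * \<psi>' r)) (at r)"
    using assms(1) unfolding lane_emden_ode_def by blast
  have eq: "\<psi>' x = deriv \<psi> x" if "x \<in> {0<..<b}" for x
    using DERIV_imp_deriv[OF conjunct1[OF d[OF that]]] by simp
  show "(\<psi> has_real_derivative deriv \<psi> r) (at r)" using d[OF assms(2)] eq[OF assms(2)] by simp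
  show "(deriv \<psi> has_real_derivative (- c * \<psi> r powr p - (real N - 1) / r * deriv \<psi> r)) (at r)"
  proof (rule has_field_derivative_transform_within_open[where S = "{0<..<b}" and f = \<psi>'])
    show "(\<psi>' has_real_derivative (- c * \<psi> r powr p - (real N - 1) / r * deriv \<psi> r)) (at r)"
      using d[OF assms(2)] eq[OF assms(2)] by simp
  qed (use assms(2) eq in auto)
qed

lemma lane_emden_positive_on_subset:
  "lane_emden_positive_on N c p \<alpha> b \<psi> \<Longrightarrow> 0 < b' \<Longrightarrow> b' \<le> b \<Longrightarrow> lane_emden_positive_on N c p \<alpha> b' \<psi>"
  unfolding lane_emden_positive_on_def using lane_emden_ode_subset by auto

lemma lane_emden_positive_on_cong:
  assumes "lane_emden_positive_on N c p \<alpha> b \<psi>" "\<And>x. x \<in> {0..b} \<Longrightarrow> \<phi> x = \<psi> x"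
  shows "lane_emden_positive_on N c p \<alpha> b \<phi>"
proof -
  have "\<phi> 0 = \<psi> 0" using assms unfolding lane_emden_positive_on_def by auto
  then show ?thesis
    using assms lane_emden_ode_cong[of N c p b \<psi> \<phi>] unfolding lane_emden_positive_on_def by auto
qed

lemma lane_emden_solution_positive_on:
  "lane_emden_solution N c p \<alpha> R \<psi> \<Longrightarrow> 0 < b \<Longrightarrow> b < R \<Longrightarrow> lane_emden_positive_on N c p \<alpha> b \<psi>"
  unfolding lane_emden_solution_def lane_emden_positive_on_def using lane_emden_ode_subset by auto

lemma continuous_on_lane_emden_powr:
  assumes "lane_emden_positive_on N c p \<alpha> b \<psi>" "r \<le> b"
  shows "continuous_on {0..r} (\<lambda>t. \<psi> t powr p)"
proof -
  have "continuous_on {0..r} \<psi>" "\<forall>t\<in>{0..r}. 0 < \<psi> t"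
    using assms unfolding lane_emden_positive_on_def lane_emden_ode_def by (auto elim: continuous_on_subset)
  then show ?thesis by (auto intro!: continuous_on_powr' continuous_on_const)
qed

lemma continuous_on_mass_density:
  assumes "lane_emden_positive_on N c p \<alpha> b \<psi>" "r \<le> b"
  shows "continuous_on {0..r} (\<lambda>t. t ^ (N - 1) * \<psi> t powr p)"
  by (rule continuous_on_mult[OF _ continuous_on_lane_emden_powr[OF assms]]) (intro continuous_intros)

lemma radial_mass_nonneg:
  assumes "lane_emden_positive_on N c p \<alpha> b \<psi>" "r \<le> b"
  shows "0 \<le> radial_mass N p \<psi> r"
  unfolding radial_mass_def
  by (rule integral_nonneg) (use integrable_continuous_interval[OF continuous_on_mass_density[OF assms]] in auto)

lemma has_real_derivative_radial_mass:
  assumes "lane_emden_positive_on N c p \<alpha> b \<psi>" "r \<in> {0<..<b}"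
  shows "(radial_mass N p \<psi> has_real_derivative r ^ (N - 1) * \<psi> r powr p) (at r)"
proof -
  have "r \<in> interior {0..b}" using assms(2) by auto
  then show ?thesis
    using integral_has_real_derivative[OF continuous_on_mass_density[OF assms(1) order_refl], of r]
      assms(2) at_within_interior[of r "{0..b}"]
    unfolding radial_mass_def by auto
qed

lemma lane_emden_flux_constant:
  assumes sol: "lane_emden_positive_on N c p \<alpha> b \<psi>" and N: "2 \<le> N"
  obtains K where "\<And>r. r \<in> {0<..<b} \<Longrightarrow> r ^ (N - 1) * deriv \<psi> r + c * radial_mass N p \<psi> r = K"
proof -
  have ode: "lane_emden_ode N c p b \<psi>" using sol unfolding lane_emden_positive_on_def by auto
  define H where "H r = r ^ (N - 1) * deriv \<psi> r + c * radial_mass N p \<psi> r" for r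
  have "(H has_real_derivative 0) (at r within {0<..<b})" if r: "r \<in> {0<..<b}" for r
  proof -
    obtain k where k: "N = Suc (Suc k)" using N by (metis add_2_eq_Suc le_Suc_ex)
    have "(H has_real_derivative (real (N - 1) * r ^ (N - 1 - 1) * deriv \<psi> r +
       r ^ (N - 1) * (- c * \<psi> r powr p - (real N - 1) / r * deriv \<psi> r) + c * (r ^ (N - 1) * \<psi> r powr p))) (at r)"
      unfolding H_def
      by (auto intro!: derivative_eq_intros lane_emden_ode_deriv(2)[OF ode r]
          has_real_derivative_radial_mass[OF sol r])
    moreover have "real (N - 1) * r ^ (N - 1 - 1) * deriv \<psi> r +
       r ^ (N - 1) * (- c * \<psi> r powr p - (real N - 1) / r * deriv \<psi> r) + c * (r ^ (N - 1) * \<psi> r powr p) = 0"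
      using r k by (simp add: field_simps)
    ultimately show ?thesis by (simp add: has_field_derivative_at_within)
  qed
  then show ?thesis
    using has_field_derivative_zero_constant[of "{0<..<b}" H] that unfolding H_def by auto
qed

text \<open>The constant flux vanishes: near \<open>0\<close> the mass is small and \<open>\<psi>'\<close> takes arbitrarily small values.\<close>
lemma lane_emden_first_integral:
  assumes sol: "lane_emden_positive_on N c p \<alpha> b \<psi>" and N: "2 \<le> N" and r: "r \<in> {0<..<b}"
  shows "(\<psi> has_real_derivative - c * radial_mass N p \<psi> r / r ^ (N - 1)) (at r)"
proof -
  define G where "G = radial_mass N p \<psi>"
  obtain K where K: "\<And>r. r \<in> {0<..<b} \<Longrightarrow> r ^ (N - 1) * deriv \<psi> r + c * G r = K"
    using lane_emden_flux_constant[OF sol N] unfolding G_def by blast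
  have b: "0 < b" and ode: "lane_emden_ode N c p b \<psi>" and cont: "continuous_on {0..b} \<psi>"
    and d0: "(\<psi> has_real_derivative 0) (at 0 within {0..b})"
    using sol unfolding lane_emden_positive_on_def lane_emden_ode_def by auto
  have K_small: "\<bar>K\<bar> \<le> 2 * e" if e: "0 < e" for e
  proof -
    have "continuous_on {0..b} G"
      unfolding G_def radial_mass_def
      by (intro indefinite_integral_continuous_1 integrable_continuous_interval
          continuous_on_mass_density[OF sol order_refl])
    moreover have "G 0 = 0" by (simp add: G_def radial_mass_def)
    ultimately have "(G \<longlongrightarrow> 0) (at 0 within {0..b})"
      using b unfolding continuous_on_def by (metis atLeastAtMost_iff order_refl less_imp_le)
    then have "eventually (\<lambda>z. dist (c * G z) 0 < e) (at 0 within {0..b})"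
      using e tendsto_mult_right_zero tendstoD by blast
    then obtain \<delta> where \<delta>: "0 < \<delta>" and small_mass: "\<And>z. z \<in> {0..b} \<Longrightarrow> z \<noteq> 0 \<Longrightarrow> \<bar>z\<bar> < \<delta> \<Longrightarrow> \<bar>c * G z\<bar> < e"
      unfolding eventually_at by (auto simp: dist_real_def)
    obtain z where z: "z \<in> {0<..<min (min \<delta> 1) b}" and small_slope: "\<bar>deriv \<psi> z\<bar> \<le> e"
      using small_derivative_near_0[OF cont d0 _ b e, of "deriv \<psi>" "min \<delta> 1"] lane_emden_ode_deriv(1)[OF ode] \<delta>
      by auto
    have "z ^ (N - 1) \<le> 1" using z by (intro power_le_one) auto
    then have "\<bar>z ^ (N - 1) * deriv \<psi> z\<bar> \<le> e"
      using z small_slope mult_left_le_one_le[of "\<bar>deriv \<psi> z\<bar>" "z ^ (N - 1)"] by (simp add: abs_mult)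
    then show ?thesis using small_mass[of z] z K[of z] by auto
  qed
  have "K = 0"
  proof (rule ccontr)
    assume "K \<noteq> 0"
    then show False using K_small[of "\<bar>K\<bar> / 4"] by auto
  qed
  then have "deriv \<psi> r = - c * G r / r ^ (N - 1)" using K[OF r] r by (simp add: field_simps)
  then show ?thesis using lane_emden_ode_deriv(1)[OF ode r] by (simp add: G_def)
qed

section \<open>Monotonicity and uniqueness\<close>

lemma lane_emden_antimono:
  assumes sol: "lane_emden_positive_on N c p \<alpha> b \<psi>" and "0 \<le> c" "2 \<le> N"
    and xy: "0 \<le> x" "x \<le> y" "y \<le> b"
  shows "\<psi> y \<le> \<psi> x"
proof (rule DERIV_nonpos_imp_decreasing_open[of x y \<psi>])
  show "continuous_on {x..y} \<psi>"
    using sol xy unfolding lane_emden_positive_on_def lane_emden_ode_def by (auto elim: continuous_on_subset)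
  fix r assume "x < r" "r < y"
  then have r: "r \<in> {0<..<b}" using xy by auto
  have "0 \<le> radial_mass N p \<psi> r" using radial_mass_nonneg[OF sol] r by auto
  then show "\<exists>d. (\<psi> has_real_derivative d) (at r) \<and> d \<le> 0"
    using lane_emden_first_integral[OF sol \<open>2 \<le> N\<close> r] r \<open>0 \<le> c\<close>
    by (intro exI conjI) (auto intro!: divide_nonpos_pos simp: mult_nonneg_nonneg)
qed (use xy in auto)

lemma lane_emden_le_initial:
  assumes "lane_emden_positive_on N c p \<alpha> b \<psi>" "0 \<le> c" "2 \<le> N" "r \<in> {0..b}"
  shows "\<psi> r \<le> \<alpha>"
  using lane_emden_antimono[OF assms(1-3), of 0 r] assms unfolding lane_emden_positive_on_def by auto

lemma lane_emden_bounded_below: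
  assumes "lane_emden_positive_on N c p \<alpha> b \<psi>"
  obtains d where "0 < d" "\<And>r. r \<in> {0..b} \<Longrightarrow> d \<le> \<psi> r"
proof -
  have b: "0 < b" and cont: "continuous_on {0..b} \<psi>" and pos: "\<forall>r\<in>{0..b}. 0 < \<psi> r"
    using assms unfolding lane_emden_positive_on_def lane_emden_ode_def by auto
  obtain x where "x \<in> {0..b}" "\<forall>y\<in>{0..b}. \<psi> x \<le> \<psi> y"
    using continuous_attains_inf[OF compact_Icc _ cont] b by auto
  then show ?thesis using that[of "\<psi> x"] pos by auto
qed

lemma radial_mass_lower_bound:
  assumes sol: "lane_emden_positive_on N c p \<alpha> b \<psi>" and "0 \<le> c" "2 \<le> N" "0 \<le> p" and r: "r \<in> {0..b}"
  shows "\<psi> r powr p * r ^ N / real N \<le> radial_mass N p \<psi> r"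
  unfolding radial_mass_def
proof (rule integral_power_weight_ge)
  fix t assume t: "t \<in> {0..r}"
  have "\<psi> r \<le> \<psi> t" using lane_emden_antimono[OF sol \<open>0 \<le> c\<close> \<open>2 \<le> N\<close>, of t r] t r by auto
  moreover have "0 < \<psi> r" using sol r unfolding lane_emden_positive_on_def by auto
  ultimately show "\<psi> r powr p \<le> \<psi> t powr p" using \<open>0 \<le> p\<close> by (intro powr_mono2) auto
qed (use r \<open>2 \<le> N\<close> continuous_on_lane_emden_powr[OF sol] in auto)

text \<open>Both solutions take values in \<open>[d, \<alpha>]\<close> with \<open>d > 0\<close>, where \<open>x \<mapsto> x\<^sup>p\<close> is Lipschitz.\<close>
lemma abs_radial_mass_diff_le:
  assumes sol1: "lane_emden_positive_on N c p \<alpha> b \<psi>1" and sol2: "lane_emden_positive_on N c p \<alpha> b \<psi>2"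
    and c: "0 \<le> c" and N: "2 \<le> N" and p: "0 < p"
  obtains L where "0 \<le> L" "\<And>\<xi>. \<xi> \<in> {0..b} \<Longrightarrow>
    \<bar>radial_mass N p \<psi>1 \<xi> - radial_mass N p \<psi>2 \<xi>\<bar> \<le> L * \<xi> ^ (N - 1) * integral {0..\<xi>} (\<lambda>t. \<bar>\<psi>1 t - \<psi>2 t\<bar>)"
proof -
  obtain d1 where d1: "0 < d1" "\<And>r. r \<in> {0..b} \<Longrightarrow> d1 \<le> \<psi>1 r"
    using lane_emden_bounded_below[OF sol1] by blast
  obtain d2 where d2: "0 < d2" "\<And>r. r \<in> {0..b} \<Longrightarrow> d2 \<le> \<psi>2 r"
    using lane_emden_bounded_below[OF sol2] by blast
  define d where "d = min d1 d2"
  have d: "0 < d" "\<And>r. r \<in> {0..b} \<Longrightarrow> d \<le> \<psi>1 r \<and> d \<le> \<psi>2 r"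
    unfolding d_def using d1 d2 by (auto simp: min_le_iff_disj)
  define L where "L = p * (d powr (p - 1) + \<alpha> powr (p - 1))"
  have L: "0 \<le> L" unfolding L_def using p by auto
  have lip: "\<bar>t ^ (N - 1) * \<psi>1 t powr p - t ^ (N - 1) * \<psi>2 t powr p\<bar> \<le> L * \<xi> ^ (N - 1) * \<bar>\<psi>1 t - \<psi>2 t\<bar>"
    if "t \<in> {0..\<xi>}" "\<xi> \<le> b" for t \<xi>
  proof -
    have "\<bar>t ^ (N - 1) * \<psi>1 t powr p - t ^ (N - 1) * \<psi>2 t powr p\<bar> = t ^ (N - 1) * \<bar>\<psi>1 t powr p - \<psi>2 t powr p\<bar>"
      using that by (simp add: abs_mult right_diff_distrib[symmetric])
    also have "\<dots> \<le> \<xi> ^ (N - 1) * (L * \<bar>\<psi>1 t - \<psi>2 t\<bar>)"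
    proof (rule mult_mono)
      show "\<bar>\<psi>1 t powr p - \<psi>2 t powr p\<bar> \<le> L * \<bar>\<psi>1 t - \<psi>2 t\<bar>"
        unfolding L_def using that d p c N
        by (intro abs_powr_diff_le lane_emden_le_initial[OF sol1] lane_emden_le_initial[OF sol2]) auto
    qed (use that in \<open>auto intro: power_mono\<close>)
    finally show ?thesis by (simp add: ac_simps)
  qed
  have "\<bar>radial_mass N p \<psi>1 \<xi> - radial_mass N p \<psi>2 \<xi>\<bar> \<le> L * \<xi> ^ (N - 1) * integral {0..\<xi>} (\<lambda>t. \<bar>\<psi>1 t - \<psi>2 t\<bar>)"
    if \<xi>: "\<xi> \<in> {0..b}" for \<xi>
  proof -
    have i1: "(\<lambda>t. t ^ (N - 1) * \<psi>1 t powr p) integrable_on {0..\<xi>}"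
      and i2: "(\<lambda>t. t ^ (N - 1) * \<psi>2 t powr p) integrable_on {0..\<xi>}"
      using \<xi> integrable_continuous_interval[OF continuous_on_mass_density[OF sol1, of \<xi>]]
        integrable_continuous_interval[OF continuous_on_mass_density[OF sol2, of \<xi>]] by auto
    have "continuous_on {0..\<xi>} (\<lambda>t. \<bar>\<psi>1 t - \<psi>2 t\<bar>)"
      using sol1 sol2 \<xi> unfolding lane_emden_positive_on_def lane_emden_ode_def
      by (auto intro!: continuous_intros elim!: continuous_on_subset)
    then have "(\<lambda>t. L * \<xi> ^ (N - 1) * \<bar>\<psi>1 t - \<psi>2 t\<bar>) integrable_on {0..\<xi>}"
      by (intro integrable_continuous_interval continuous_on_mult_left)
    then have "norm (integral {0..\<xi>} (\<lambda>t. t ^ (N - 1) * \<psi>1 t powr p - t ^ (N - 1) * \<psi>2 t powr p))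
        \<le> integral {0..\<xi>} (\<lambda>t. L * \<xi> ^ (N - 1) * \<bar>\<psi>1 t - \<psi>2 t\<bar>)"
      using lip[of _ \<xi>] \<xi> integrable_diff[OF i1 i2] by (intro integral_norm_bound_integral) auto
    then show ?thesis unfolding radial_mass_def integral_diff[OF i1 i2, symmetric] by simp
  qed
  with L that show ?thesis by blast
qed

lemma lane_emden_positive_on_unique:
  assumes sol1: "lane_emden_positive_on N c p \<alpha> b \<psi>1" and sol2: "lane_emden_positive_on N c p \<alpha> b \<psi>2"
    and c: "0 < c" and N: "2 \<le> N" and p: "0 < p" and r: "r \<in> {0..b}"
  shows "\<psi>1 r = \<psi>2 r"
proof -
  obtain L where L: "0 \<le> L" and mass_diff: "\<And>\<xi>. \<xi> \<in> {0..b} \<Longrightarrow>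
      \<bar>radial_mass N p \<psi>1 \<xi> - radial_mass N p \<psi>2 \<xi>\<bar> \<le> L * \<xi> ^ (N - 1) * integral {0..\<xi>} (\<lambda>t. \<bar>\<psi>1 t - \<psi>2 t\<bar>)"
    using abs_radial_mass_diff_le[OF sol1 sol2 _ N p] c by auto
  define w' where "w' \<xi> = - c * radial_mass N p \<psi>1 \<xi> / \<xi> ^ (N - 1) - - c * radial_mass N p \<psi>2 \<xi> / \<xi> ^ (N - 1)" for \<xi>
  have "(\<lambda>t. \<psi>1 t - \<psi>2 t) r = 0"
  proof (rule zero_if_derivative_bounded_by_integral[where w = "\<lambda>t. \<psi>1 t - \<psi>2 t" and w' = w' and K = "c * L"])
    show "continuous_on {0..b} (\<lambda>t. \<psi>1 t - \<psi>2 t)"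
      using sol1 sol2 unfolding lane_emden_positive_on_def lane_emden_ode_def by (auto intro: continuous_intros)
    fix \<xi> assume \<xi>: "\<xi> \<in> {0<..<b}"
    show "((\<lambda>t. \<psi>1 t - \<psi>2 t) has_real_derivative w' \<xi>) (at \<xi>)"
      unfolding w'_def using \<xi>
      by (intro DERIV_diff lane_emden_first_integral[OF sol1 N] lane_emden_first_integral[OF sol2 N])
    have "\<bar>w' \<xi>\<bar> = c * \<bar>radial_mass N p \<psi>1 \<xi> - radial_mass N p \<psi>2 \<xi>\<bar> / \<xi> ^ (N - 1)"
      unfolding w'_def using c \<xi> by (simp add: abs_divide abs_mult diff_divide_distrib[symmetric] right_diff_distrib[symmetric])
    also have "\<dots> \<le> c * (L * \<xi> ^ (N - 1) * integral {0..\<xi>} (\<lambda>t. \<bar>\<psi>1 t - \<psi>2 t\<bar>)) / \<xi> ^ (N - 1)"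
      using mass_diff[of \<xi>] \<xi> c by (intro divide_right_mono mult_left_mono) auto
    finally show "\<bar>w' \<xi>\<bar> \<le> c * L * integral {0..\<xi>} (\<lambda>t. \<bar>\<psi>1 t - \<psi>2 t\<bar>)" using \<xi> by simp
  qed (use sol1 sol2 r c L in \<open>auto simp: lane_emden_positive_on_def\<close>)
  then show ?thesis by simp
qed

section \<open>No positive solution on the whole half-line\<close>

text \<open>Far out, \<open>\<psi>' \<le> -c G(1) / r\<^sup>N\<^sup>-\<^sup>1\<close>, so \<open>\<psi>\<close> decays at most like the fundamental solution \<open>r\<^sup>2\<^sup>-\<^sup>N\<close>.\<close>
lemma global_lane_emden_lower_bound:
  assumes N: "3 \<le> N" and c: "0 < c" and p: "0 \<le> p"
    and global: "\<And>b. 0 < b \<Longrightarrow> lane_emden_positive_on N c p \<alpha> b \<psi>"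
  obtains a where "0 < a" "\<And>r. 1 \<le> r \<Longrightarrow> a * r powr - (real N - 2) \<le> \<psi> r"
proof -
  define G where "G = radial_mass N p \<psi>"
  define k where "k = real N - 2"
  define a where "a = c * G 1 / k"
  have k: "1 \<le> k" and k_pred: "real (N - 1) = k + 1" unfolding k_def using N by auto
  have pos: "0 < \<psi> r" if "0 \<le> r" for r
    using global[of "r + 1"] that unfolding lane_emden_positive_on_def by auto
  have "0 < \<psi> 1 powr p * 1 ^ N / real N" using pos[of 1] N by auto
  then have a: "0 < a"
    unfolding a_def G_def using radial_mass_lower_bound[OF global[of 1] _ _ p, of 1] c k N by auto
  have "a * r powr - k \<le> \<psi> r" if r: "1 \<le> r" for r
  proof (rule powr_decay_lower_bound[where f' = "\<lambda>x. - c * G x / x ^ (N - 1)"])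
    fix x assume x: "r \<le> x"
    show "(\<psi> has_real_derivative - c * G x / x ^ (N - 1)) (at x)"
      using lane_emden_first_integral[OF global[of "x + 1"]] x r N unfolding G_def by auto
    have "x powr (- k - 1) = inverse (x powr (k + 1))" by (simp add: powr_minus[symmetric])
    also have "\<dots> = inverse (x ^ (N - 1))" unfolding k_pred[symmetric] using x r by (simp add: powr_realpow)
    finally have "- a * k * x powr (- k - 1) = - c * G 1 / x ^ (N - 1)"
      using k unfolding a_def by (simp add: divide_inverse)
    moreover have "G 1 \<le> G x"
      unfolding G_def radial_mass_def using x r pos
      by (intro integral_Icc_mono_right continuous_on_mass_density[OF global[of x]]) auto
    ultimately show "- c * G x / x ^ (N - 1) \<le> - a * k * x powr (- k - 1)"
      using c x r by (simp add: divide_right_mono)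
  qed (use r k pos in auto)
  then show ?thesis using that a unfolding k_def by blast
qed

text \<open>For \<open>s > 1\<close>, the mass lower bound gives \<open>(\<psi>\<^sup>1\<^sup>-\<^sup>s)' = (s - 1) c \<psi>\<^sup>-\<^sup>s G / r\<^sup>N\<^sup>-\<^sup>1 \<ge> (s - 1) c \<alpha>\<^sup>p\<^sup>-\<^sup>s r / N\<close>.\<close>
lemma global_lane_emden_growth:
  assumes N: "2 \<le> N" and c: "0 < c" and p: "0 \<le> p" "p \<le> s" and s: "1 < s"
    and global: "\<And>b. 0 < b \<Longrightarrow> lane_emden_positive_on N c p \<alpha> b \<psi>"
  obtains \<kappa> where "0 < \<kappa>" "\<And>r. 0 < r \<Longrightarrow> \<kappa> * r\<^sup>2 \<le> \<psi> r powr (1 - s)"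
proof -
  define G where "G = radial_mass N p \<psi>"
  have deriv: "(\<psi> has_real_derivative - c * G r / r ^ (N - 1)) (at r)" if "0 < r" for r
    using lane_emden_first_integral[OF global[of "r + 1"] N] that unfolding G_def by auto
  have pos: "0 < \<psi> r" if "0 \<le> r" for r
    using global[of "r + 1"] that unfolding lane_emden_positive_on_def by auto
  have le_initial: "\<psi> r \<le> \<alpha>" if "0 \<le> r" for r
    using lane_emden_le_initial[OF global[of "r + 1"] _ N, of r] c that by auto
  have "0 < \<alpha>" using pos[of 0] global[of 1] unfolding lane_emden_positive_on_def by auto
  define \<kappa> where "\<kappa> = (s - 1) * c / real N * \<alpha> powr (p - s) / 2"
  have \<kappa>: "0 < \<kappa>" unfolding \<kappa>_def using s c \<open>0 < \<alpha>\<close> N by auto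
  define z where "z r = \<psi> r powr (1 - s) - \<kappa> * r\<^sup>2" for r
  have z_mono: "z 0 \<le> z r" if r: "0 < r" for r
  proof (rule DERIV_nonneg_imp_increasing_open[of 0 r z])
    have "continuous_on {0..r} \<psi>"
      using global[of r] r unfolding lane_emden_positive_on_def lane_emden_ode_def by auto
    then show "continuous_on {0..r} z"
      unfolding z_def using pos by (intro continuous_intros continuous_on_powr') force+
    fix x assume x: "0 < x" "x < r"
    have "\<kappa> * (2 * x) = (s - 1) * c / real N * x * \<alpha> powr (p - s)" unfolding \<kappa>_def by simp
    also have "\<dots> \<le> (s - 1) * c / real N * x * \<psi> x powr (p - s)"
      using le_initial[of x] pos[of x] x p s c by (intro mult_left_mono powr_mono2') auto
    also have "\<dots> = (s - 1) * c * \<psi> x powr - s * (\<psi> x powr p * x / real N)"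
      by (simp add: powr_add[symmetric])
    also have "\<dots> = (s - 1) * c * \<psi> x powr - s * (\<psi> x powr p * x ^ N / real N / x ^ (N - 1))"
      using x N by (simp add: power_diff)
    also have "\<dots> \<le> (s - 1) * c * \<psi> x powr - s * (G x / x ^ (N - 1))"
      using radial_mass_lower_bound[OF global[of "x + 1"] _ N p(1), of x] c s x unfolding G_def
      by (intro mult_left_mono divide_right_mono) auto
    finally have "0 \<le> (1 - s) * \<psi> x powr - s * (- c * G x / x ^ (N - 1)) - \<kappa> * (2 * x)"
      by (simp add: algebra_simps)
    moreover have "(z has_real_derivative (1 - s) * \<psi> x powr - s * (- c * G x / x ^ (N - 1)) - \<kappa> * (2 * x)) (at x)"
      unfolding z_def using x pos[of x] by (auto intro!: derivative_eq_intros deriv)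
    ultimately show "\<exists>y. (z has_real_derivative y) (at x) \<and> 0 \<le> y" by blast
  qed (use r in auto)
  show ?thesis
  proof (rule that[OF \<kappa>])
    fix r :: real assume "0 < r"
    then have "\<psi> 0 powr (1 - s) \<le> \<psi> r powr (1 - s) - \<kappa> * r\<^sup>2"
      using z_mono by (simp add: z_def)
    moreover have "0 \<le> \<psi> 0 powr (1 - s)" by simp
    ultimately show "\<kappa> * r\<^sup>2 \<le> \<psi> r powr (1 - s)" by linarith
  qed
qed

text \<open>With \<open>1 < s < N/(N-2)\<close> the two bounds read \<open>\<kappa> r\<^sup>2 \<le> \<psi>\<^sup>1\<^sup>-\<^sup>s \<le> a\<^sup>1\<^sup>-\<^sup>s r\<^sup>(\<^sup>N\<^sup>-\<^sup>2\<^sup>)\<^sup>(\<^sup>s\<^sup>-\<^sup>1\<^sup>)\<close>, and the exponent on the right is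
  smaller than \<open>2\<close>.\<close>
theorem no_global_lane_emden:
  assumes N: "3 \<le> N" and c: "0 < c" and p: "0 < p" "p < real N / (real N - 2)"
    and global: "\<And>b. 0 < b \<Longrightarrow> lane_emden_positive_on N c p \<alpha> b \<psi>"
  shows False
proof -
  define k where "k = real N - 2"
  have k: "1 \<le> k" unfolding k_def using N by auto
  have "1 < real N / (real N - 2)" using N by (simp add: field_simps)
  then obtain s where s: "1 < s" "p < s" "s < real N / (real N - 2)"
    using p by (metis dense max.strict_boundedE max_less_iff_conj)
  have "s - 1 < 2 / k" using s(3) k unfolding k_def by (simp add: field_simps)
  then have \<gamma>: "0 < 2 - k * (s - 1)" using k by (simp add: field_simps)
  obtain a where a: "0 < a" "\<And>r. 1 \<le> r \<Longrightarrow> a * r powr - (real N - 2) \<le> \<psi> r"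
    using global_lane_emden_lower_bound[OF N c less_imp_le[OF p(1)] global] by blast
  obtain \<kappa> where \<kappa>: "0 < \<kappa>" "\<And>r. 0 < r \<Longrightarrow> \<kappa> * r\<^sup>2 \<le> \<psi> r powr (1 - s)"
    using global_lane_emden_growth[OF _ c less_imp_le[OF p(1)] less_imp_le[OF s(2)] s(1) global] N by auto
  define A where "A = a powr (1 - s)"
  have bound: "\<kappa> * r powr (2 - k * (s - 1)) \<le> A" if r: "1 \<le> r" for r
  proof -
    have "\<kappa> * r powr 2 \<le> \<psi> r powr (1 - s)" using \<kappa>(2)[of r] r by (simp add: powr_realpow)
    also have "\<dots> \<le> (a * r powr - k) powr (1 - s)"
      using a(2)[OF r] a(1) r s unfolding k_def by (intro powr_mono2') auto
    also have "\<dots> = A * r powr (k * (s - 1))"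
      unfolding A_def powr_mult powr_powr by (simp add: algebra_simps)
    finally have "\<kappa> * r powr 2 / r powr (k * (s - 1)) \<le> A" using r by (simp add: divide_le_eq)
    then show ?thesis by (simp add: powr_diff)
  qed
  define r where "r = max 1 ((A / \<kappa> + 1) powr (1 / (2 - k * (s - 1))))"
  have "A / \<kappa> + 1 = ((A / \<kappa> + 1) powr (1 / (2 - k * (s - 1)))) powr (2 - k * (s - 1))"
    using \<gamma> \<kappa>(1) by (simp add: A_def powr_powr)
  also have "\<dots> \<le> r powr (2 - k * (s - 1))" unfolding r_def using \<gamma> by (intro powr_mono2) auto
  finally have "\<kappa> * (A / \<kappa> + 1) \<le> A" using bound[of r] \<kappa>(1) unfolding r_def
    by (meson max.cobounded1 mult_left_mono order_trans less_imp_le)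
  moreover have "\<kappa> * (A / \<kappa> + 1) = A + \<kappa>" using \<kappa>(1) by (simp add: field_simps)
  ultimately show False using \<kappa>(1) by linarith
qed

section \<open>The integral equation\<close>

text \<open>\<open>radial_potential N g r = \<integral>\<^sub>0\<^sup>r t (1 - (t/r)\<^sup>N\<^sup>-\<^sup>2) g t dt\<close>, so that \<open>u = 1 - c/(N-2) \<cdot> radial_potential N g\<close>
  solves \<open>u'' + (N-1)/r u' = -c g\<close> with \<open>u(0) = 1\<close>, \<open>u'(0) = 0\<close>.\<close>
definition radial_potential :: "nat \<Rightarrow> (real \<Rightarrow> real) \<Rightarrow> real \<Rightarrow> real" where
  "radial_potential N g r =
     integral {0..r} (\<lambda>t. t * g t) - integral {0..r} (\<lambda>t. t ^ (N - 1) * g t) / r ^ (N - 2)"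

lemma radial_potential_0 [simp]: "radial_potential N g 0 = 0"
  unfolding radial_potential_def by simp

lemma abs_radial_potential_le:
  assumes g: "continuous_on {0..r} g" and "0 \<le> r" and N: "2 \<le> N"
  shows "\<bar>radial_potential N g r\<bar> \<le> integral {0..r} (\<lambda>t. t * \<bar>g t\<bar>)"
proof (cases "r = 0")
  case False
  then have r: "0 < r" using \<open>0 \<le> r\<close> by simp
  have i1: "(\<lambda>t. t * g t) integrable_on {0..r}"
    and i2: "(\<lambda>t. t ^ (N - 1) * g t / r ^ (N - 2)) integrable_on {0..r}"
    by (intro integrable_continuous_interval continuous_intros g; use r in simp)+
  have "radial_potential N g r = integral {0..r} (\<lambda>t. t * g t - t ^ (N - 1) * g t / r ^ (N - 2))"
    unfolding radial_potential_def using integral_diff[OF i1 i2] by simp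
  also have "norm \<dots> \<le> integral {0..r} (\<lambda>t. t * \<bar>g t\<bar>)"
  proof (rule integral_norm_bound_integral)
    show "(\<lambda>t. t * g t - t ^ (N - 1) * g t / r ^ (N - 2)) integrable_on {0..r}"
      using i1 i2 by (rule integrable_diff)
    show "(\<lambda>t. t * \<bar>g t\<bar>) integrable_on {0..r}"
      by (intro integrable_continuous_interval continuous_intros g)
    fix t assume t: "t \<in> {0..r}"
    define q where "q = t ^ (N - 2) / r ^ (N - 2)"
    have "t ^ (N - 2) \<le> r ^ (N - 2)" using t by (intro power_mono) auto
    then have q: "0 \<le> q" "q \<le> 1" unfolding q_def using t r by auto
    obtain k where "N = Suc (Suc k)" using N by (metis add_2_eq_Suc le_Suc_ex)
    then have "t ^ (N - 1) = t * t ^ (N - 2)" by simp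
    then have "t * g t - t ^ (N - 1) * g t / r ^ (N - 2) = (1 - q) * (t * g t)"
      unfolding q_def by (simp add: algebra_simps)
    then show "norm (t * g t - t ^ (N - 1) * g t / r ^ (N - 2)) \<le> t * \<bar>g t\<bar>"
      using t q by (simp add: abs_mult mult_left_le_one_le)
  qed
  finally show ?thesis by simp
qed simp

lemma abs_radial_potential_le_square:
  assumes g: "continuous_on {0..r} g" and "0 \<le> r" and N: "2 \<le> N" and B: "\<And>t. t \<in> {0..r} \<Longrightarrow> \<bar>g t\<bar> \<le> B"
  shows "\<bar>radial_potential N g r\<bar> \<le> B * r\<^sup>2 / 2"
proof -
  have "\<bar>radial_potential N g r\<bar> \<le> integral {0..r} (\<lambda>t. t * \<bar>g t\<bar>)"
    by (rule abs_radial_potential_le[OF assms(1-3)])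
  also have "\<dots> \<le> integral {0..r} (\<lambda>t. B * t ^ 1)"
    using B by (intro integral_le integrable_continuous_interval continuous_intros g)
      (auto simp: mult.commute intro!: mult_left_mono)
  also have "\<dots> = B * r\<^sup>2 / 2"
    using has_integral_power_0[OF \<open>0 \<le> r\<close>, of 1] by (simp add: integral_unique power2_eq_square)
  finally show ?thesis .
qed

lemma radial_potential_diff:
  assumes "continuous_on {0..r} g1" "continuous_on {0..r} g2"
  shows "radial_potential N g1 r - radial_potential N g2 r = radial_potential N (\<lambda>t. g1 t - g2 t) r"
proof -
  have i: "(\<lambda>t. t * g t) integrable_on {0..r}" "(\<lambda>t. t ^ (N - 1) * g t) integrable_on {0..r}"
    if "continuous_on {0..r} g" for g
    using that by (auto intro!: integrable_continuous_interval continuous_intros)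
  have "integral {0..r} (\<lambda>t. t * (g1 t - g2 t)) =
      integral {0..r} (\<lambda>t. t * g1 t) - integral {0..r} (\<lambda>t. t * g2 t)"
    using integral_diff[OF i(1)[OF assms(1)] i(1)[OF assms(2)]] by (simp add: right_diff_distrib)
  moreover have "integral {0..r} (\<lambda>t. t ^ (N - 1) * (g1 t - g2 t)) =
      integral {0..r} (\<lambda>t. t ^ (N - 1) * g1 t) - integral {0..r} (\<lambda>t. t ^ (N - 1) * g2 t)"
    using integral_diff[OF i(2)[OF assms(1)] i(2)[OF assms(2)]] by (simp add: right_diff_distrib)
  ultimately show ?thesis
    unfolding radial_potential_def by (simp add: diff_divide_distrib)
qed

lemma continuous_on_radial_potential:
  assumes g: "continuous_on {0..A} g" and N: "2 \<le> N"
  shows "continuous_on {0..A} (radial_potential N g)"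
  unfolding continuous_on_eq_continuous_within
proof
  fix x assume x: "x \<in> {0..A}"
  have cont_integral: "continuous (at x within {0..A}) (\<lambda>r. integral {0..r} f)"
    if "continuous_on {0..A} f" for f :: "real \<Rightarrow> real"
    using indefinite_integral_continuous_1[OF integrable_continuous_interval[OF that]] x
    unfolding continuous_on_eq_continuous_within by blast
  show "continuous (at x within {0..A}) (radial_potential N g)"
  proof (cases "x = 0")
    case False
    then show ?thesis
      unfolding radial_potential_def[abs_def]
      by (intro continuous_intros cont_integral g) auto
  next
    case True
    obtain B where B: "\<And>t. t \<in> {0..A} \<Longrightarrow> \<bar>g t\<bar> \<le> B"
      using compact_imp_bounded[OF compact_continuous_image[OF g compact_Icc]]
      unfolding bounded_iff by force
    have "(radial_potential N g \<longlongrightarrow> 0) (at 0 within {0..A})"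
    proof (rule Lim_null_comparison)
      show "eventually (\<lambda>r. norm (radial_potential N g r) \<le> B * r\<^sup>2 / 2) (at 0 within {0..A})"
        using abs_radial_potential_le_square[OF continuous_on_subset[OF g] _ N B]
        by (auto simp: eventually_at_filter)
      show "((\<lambda>r. B * r\<^sup>2 / 2) \<longlongrightarrow> 0) (at 0 within {0..A})"
        by (auto intro!: tendsto_eq_intros)
    qed
    then show ?thesis using True by (simp add: continuous_within)
  qed
qed

lemma has_real_derivative_radial_potential:
  assumes g: "continuous_on {0..A} g" and N: "3 \<le> N" and r: "r \<in> {0<..<A}"
  shows "(radial_potential N g has_real_derivative
           (real N - 2) * integral {0..r} (\<lambda>t. t ^ (N - 1) * g t) / r ^ (N - 1)) (at r)"
proof -
  have at: "at r within {0..A} = at r" using r by (intro at_within_interior) auto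
  have d_integral: "((\<lambda>r. integral {0..r} f) has_real_derivative f r) (at r)"
    if "continuous_on {0..A} f" for f :: "real \<Rightarrow> real"
    using integral_has_real_derivative[OF that, of r] r unfolding at by auto
  define I where "I = integral {0..r} (\<lambda>t. t ^ (N - 1) * g t)"
  obtain k where k: "N = Suc (Suc (Suc k))" using le_Suc_ex[OF N] by auto
  have "(radial_potential N g has_real_derivative
      (r * g r - (r ^ (N - 1) * g r * r ^ (N - 2) - I * (real (N - 2) * r ^ (N - 2 - Suc 0))) /
        (r ^ (N - 2) * r ^ (N - 2)))) (at r)"
    unfolding radial_potential_def[abs_def] I_def using r
    by (intro DERIV_diff DERIV_divide DERIV_pow d_integral continuous_intros g) auto
  moreover have "r * g r - (r ^ (N - 1) * g r * r ^ (N - 2) - I * (real (N - 2) * r ^ (N - 2 - Suc 0))) /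
      (r ^ (N - 2) * r ^ (N - 2)) = (real N - 2) * I / r ^ (N - 1)"
    using r unfolding k by (simp add: field_simps)
  ultimately show ?thesis unfolding I_def by simp
qed

lemma abs_radial_potential_diff_le_exp:
  assumes g1: "continuous_on {0..\<tau>} g1" and g2: "continuous_on {0..\<tau>} g2" and "0 \<le> \<tau>" "2 \<le> N" "0 < K"
    and diff: "\<And>s. s \<in> {0..\<tau>} \<Longrightarrow> \<bar>g1 s - g2 s\<bar> \<le> M * exp (K * s\<^sup>2)"
  shows "\<bar>radial_potential N g1 \<tau> - radial_potential N g2 \<tau>\<bar> \<le> M * exp (K * \<tau>\<^sup>2) / (2 * K)"
proof -
  have "\<bar>g1 0 - g2 0\<bar> \<le> M" using diff[of 0] \<open>0 \<le> \<tau>\<close> by simp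
  then have "0 \<le> M" by linarith
  have "\<bar>radial_potential N g1 \<tau> - radial_potential N g2 \<tau>\<bar> \<le> integral {0..\<tau>} (\<lambda>t. t * \<bar>g1 t - g2 t\<bar>)"
    unfolding radial_potential_diff[OF g1 g2]
    by (rule abs_radial_potential_le) (use g1 g2 assms in \<open>auto intro: continuous_intros\<close>)
  also have "\<dots> \<le> integral {0..\<tau>} (\<lambda>t. M * (t * exp (K * t\<^sup>2)))"
    using diff by (intro integral_le integrable_continuous_interval continuous_intros g1 g2)
      (auto simp: mult.left_commute intro!: mult_left_mono)
  also have "\<dots> = M * ((exp (K * \<tau>\<^sup>2) - 1) / (2 * K))"
    using integral_times_exp_square[OF \<open>0 < K\<close> \<open>0 \<le> \<tau>\<close>] by simp
  also have "\<dots> \<le> M * exp (K * \<tau>\<^sup>2) / (2 * K)"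
    using \<open>0 \<le> M\<close> \<open>0 < K\<close> by (simp add: divide_right_mono mult_left_mono)
  finally show ?thesis .
qed

text \<open>In the weight \<open>exp (- K s\<^sup>2)\<close>, with \<open>K\<close> exceeding \<open>|c|\<close> times the Lipschitz constant, the integral
  operator halves distances, whatever the length of the interval.\<close>
lemma weighted_radial_potential_contraction:
  fixes f v1 v2 :: "real \<Rightarrow> real" and c L d \<tau> :: real
  assumes N: "3 \<le> N" and f: "continuous_on UNIV f" and lip: "\<And>x y. \<bar>f x - f y\<bar> \<le> L * \<bar>x - y\<bar>"
    and v1: "continuous_on UNIV v1" and v2: "continuous_on UNIV v2" and d: "\<And>s. \<bar>v1 s - v2 s\<bar> \<le> d"
    and \<tau>: "0 \<le> \<tau>"
  defines "K \<equiv> \<bar>c\<bar> * L + 1"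
  shows "exp (- K * \<tau>\<^sup>2) * (\<bar>c\<bar> / (real N - 2)) * \<bar>radial_potential N (\<lambda>s. f (v1 s * exp (K * s\<^sup>2))) \<tau> -
      radial_potential N (\<lambda>s. f (v2 s * exp (K * s\<^sup>2))) \<tau>\<bar> \<le> d / 2"
proof -
  have L: "0 \<le> L" using lip[of 1 0] by simp
  have K: "0 < K" unfolding K_def using L by (simp add: add_nonneg_pos)
  have cont: "continuous_on {0..\<tau>} (\<lambda>s. f (v s * exp (K * s\<^sup>2)))" if "continuous_on UNIV v" for v
    by (intro continuous_on_compose2[OF f] continuous_intros continuous_on_subset[OF that]) auto
  have "\<bar>f (v1 s * exp (K * s\<^sup>2)) - f (v2 s * exp (K * s\<^sup>2))\<bar> \<le> L * d * exp (K * s\<^sup>2)" for s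
  proof -
    have "\<bar>f (v1 s * exp (K * s\<^sup>2)) - f (v2 s * exp (K * s\<^sup>2))\<bar> \<le> L * (\<bar>v1 s - v2 s\<bar> * exp (K * s\<^sup>2))"
      using lip[of "v1 s * exp (K * s\<^sup>2)" "v2 s * exp (K * s\<^sup>2)"] by (simp add: abs_mult left_diff_distrib[symmetric])
    also have "\<dots> \<le> L * (d * exp (K * s\<^sup>2))" using d[of s] L by (intro mult_left_mono mult_right_mono) auto
    finally show ?thesis by (simp add: ac_simps)
  qed
  then have "\<bar>radial_potential N (\<lambda>s. f (v1 s * exp (K * s\<^sup>2))) \<tau> - radial_potential N (\<lambda>s. f (v2 s * exp (K * s\<^sup>2))) \<tau>\<bar>
      \<le> L * d * exp (K * \<tau>\<^sup>2) / (2 * K)"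
    using N K \<tau> by (intro abs_radial_potential_diff_le_exp cont v1 v2) auto
  then have "exp (- K * \<tau>\<^sup>2) * (\<bar>c\<bar> / (real N - 2)) * \<bar>radial_potential N (\<lambda>s. f (v1 s * exp (K * s\<^sup>2))) \<tau> -
      radial_potential N (\<lambda>s. f (v2 s * exp (K * s\<^sup>2))) \<tau>\<bar>
      \<le> exp (- K * \<tau>\<^sup>2) * (\<bar>c\<bar> / (real N - 2)) * (L * d * exp (K * \<tau>\<^sup>2) / (2 * K))"
    using N by (intro mult_left_mono) auto
  also have "\<dots> = \<bar>c\<bar> * L / K * d / (2 * (real N - 2))"
  proof -
    have "exp (- K * \<tau>\<^sup>2) * exp (K * \<tau>\<^sup>2) = 1" by (simp add: exp_minus[symmetric] exp_add[symmetric])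
    moreover have "0 < real N - 2" using N by simp
    ultimately show ?thesis using K by (simp add: field_simps)
  qed
  also have "\<dots> \<le> 1 * d / (2 * 1)"
  proof (intro frac_le mult_right_mono)
    show "\<bar>c\<bar> * L / K \<le> 1" using K unfolding K_def by (simp add: divide_le_eq)
  qed (use N d[of 0] in auto)
  finally show ?thesis by simp
qed

text \<open>Banach's fixed point theorem in the bounded continuous functions, for \<open>v\<close> with \<open>u s = v s \<cdot> exp (K s\<^sup>2)\<close>.\<close>
lemma radial_integral_equation_solvable:
  fixes f :: "real \<Rightarrow> real"
  assumes N: "3 \<le> N" and f: "continuous_on UNIV f" and lip: "\<And>x y. \<bar>f x - f y\<bar> \<le> L * \<bar>x - y\<bar>"
    and A: "0 \<le> A"
  obtains u where "continuous_on {0..A} u"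
    "\<And>r. r \<in> {0..A} \<Longrightarrow> u r = 1 - c / (real N - 2) * radial_potential N (\<lambda>t. f (u t)) r"
proof -
  define K where "K = \<bar>c\<bar> * L + 1"
  define cl where "cl t = max 0 (min t A)" for t
  have cl: "cl t \<in> {0..A}" "continuous_on UNIV cl" for t unfolding cl_def using A by (auto intro!: continuous_intros)
  define U where "U v s = v s * exp (K * s\<^sup>2)" for v :: "real \<Rightarrow> real" and s
  define H where "H v \<tau> = exp (- K * \<tau>\<^sup>2) * (1 - c / (real N - 2) * radial_potential N (\<lambda>t. f (U v t)) \<tau>)" for v \<tau>
  have cont_H: "continuous_on {0..A} (H (apply_bcontfun v))" for v
    unfolding H_def U_def using N
    by (intro continuous_intros continuous_on_radial_potential continuous_on_compose2[OF f]) auto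
  have bcontfun_H: "(\<lambda>t. H (apply_bcontfun v) (cl t)) \<in> bcontfun" for v
  proof -
    have "continuous_on UNIV (\<lambda>t. H (apply_bcontfun v) (cl t))"
      using cl by (intro continuous_on_compose2[OF cont_H[of v]]) auto
    moreover have "bounded (range (\<lambda>t. H (apply_bcontfun v) (cl t)))"
      using cl by (intro bounded_subset[OF compact_imp_bounded[OF compact_continuous_image[OF cont_H]]])
        (auto intro: compact_Icc)
    ultimately show ?thesis unfolding bcontfun_def by auto
  qed
  define \<Phi> where "\<Phi> v = Bcontfun (\<lambda>t. H (apply_bcontfun v) (cl t))" for v :: "real \<Rightarrow>\<^sub>C real"
  have \<Phi>: "apply_bcontfun (\<Phi> v) t = H (apply_bcontfun v) (cl t)" for v t
    unfolding \<Phi>_def using bcontfun_H[of v] by (simp add: Bcontfun_inverse)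
  have "dist (\<Phi> v1) (\<Phi> v2) \<le> 1/2 * dist v1 v2" for v1 v2
  proof (rule dist_bound)
    fix t
    define V where "V v = radial_potential N (\<lambda>s. f (U (apply_bcontfun v) s)) (cl t)" for v
    have "H (apply_bcontfun v1) (cl t) - H (apply_bcontfun v2) (cl t) =
        - (exp (- K * (cl t)\<^sup>2) * (c / (real N - 2)) * (V v1 - V v2))"
      unfolding H_def V_def by (simp add: algebra_simps)
    then have "\<bar>H (apply_bcontfun v1) (cl t) - H (apply_bcontfun v2) (cl t)\<bar> =
        exp (- K * (cl t)\<^sup>2) * (\<bar>c\<bar> / (real N - 2)) * \<bar>V v1 - V v2\<bar>"
      using N by (simp add: abs_mult abs_divide)
    also have "\<dots> \<le> dist v1 v2 / 2"
      unfolding V_def U_def K_def using dist_bounded[of v1 _ v2] cl(1)[of t]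
      by (intro weighted_radial_potential_contraction N f lip) (auto simp: dist_real_def)
    finally show "dist (apply_bcontfun (\<Phi> v1) t) (apply_bcontfun (\<Phi> v2) t) \<le> 1/2 * dist v1 v2"
      unfolding \<Phi> dist_real_def by simp
  qed
  then obtain v where v: "\<Phi> v = v" using banach_fix_type[of "1/2" \<Phi>] by auto
  show ?thesis
  proof (rule that[of "U (apply_bcontfun v)"])
    show "continuous_on {0..A} (U (apply_bcontfun v))" unfolding U_def by (intro continuous_intros) auto
    fix r assume "r \<in> {0..A}"
    then have "apply_bcontfun v r = H (apply_bcontfun v) r"
      using \<Phi>[of v r] v by (simp add: cl_def)
    then show "U (apply_bcontfun v) r = 1 - c / (real N - 2) * radial_potential N (\<lambda>t. f (U (apply_bcontfun v) t)) r"
      unfolding H_def U_def by (simp add: exp_minus field_simps)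
  qed
qed

text \<open>A truncation of \<open>x\<^sup>p\<close> that is bounded and globally Lipschitz, and agrees with \<open>x\<^sup>p\<close> on \<open>[\<epsilon>, 1]\<close>.\<close>
definition clamped_powr :: "real \<Rightarrow> real \<Rightarrow> real \<Rightarrow> real" where
  "clamped_powr \<epsilon> p x = (max \<epsilon> (min x 1)) powr p"

lemma clamped_powr_bounds:
  assumes "0 < \<epsilon>" "\<epsilon> \<le> 1" "0 \<le> p"
  shows "\<epsilon> powr p \<le> clamped_powr \<epsilon> p x" "clamped_powr \<epsilon> p x \<le> 1"
  unfolding clamped_powr_def using assms by (auto intro!: powr_mono2 powr_le1)

lemma continuous_on_clamped_powr: "0 < \<epsilon> \<Longrightarrow> continuous_on S (clamped_powr \<epsilon> p)"
  unfolding clamped_powr_def by (rule continuous_on_powr') (auto intro!: continuous_intros)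

lemma clamped_powr_eq: "\<epsilon> \<le> x \<Longrightarrow> x \<le> 1 \<Longrightarrow> clamped_powr \<epsilon> p x = x powr p"
  unfolding clamped_powr_def by (simp add: max_def min_def)

lemma clamped_powr_lipschitz:
  assumes "0 < \<epsilon>" "\<epsilon> \<le> 1" "0 < p"
  shows "\<bar>clamped_powr \<epsilon> p x - clamped_powr \<epsilon> p y\<bar> \<le> p * (\<epsilon> powr (p - 1) + 1) * \<bar>x - y\<bar>"
proof -
  define X where "X = max \<epsilon> (min x 1)"
  define Y where "Y = max \<epsilon> (min y 1)"
  have "\<bar>X powr p - Y powr p\<bar> \<le> p * (\<epsilon> powr (p - 1) + 1 powr (p - 1)) * \<bar>X - Y\<bar>"
    by (rule abs_powr_diff_le) (use assms in \<open>auto simp: X_def Y_def\<close>)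
  also have "\<dots> \<le> p * (\<epsilon> powr (p - 1) + 1) * \<bar>x - y\<bar>"
  proof -
    have "\<bar>X - Y\<bar> \<le> \<bar>x - y\<bar>" unfolding X_def Y_def by (auto simp: max_def min_def)
    then show ?thesis using assms by (simp add: mult_left_mono)
  qed
  finally show ?thesis unfolding clamped_powr_def X_def Y_def .
qed

lemma has_real_derivative_mean_flux:
  assumes g: "continuous_on {0..A} g" and N: "2 \<le> N" and r: "r \<in> {0<..<A}"
  defines "F \<equiv> \<lambda>r. integral {0..r} (\<lambda>t. t ^ (N - 1) * g t) / r ^ (N - 1)"
  shows "(F has_real_derivative g r - (real N - 1) / r * F r) (at r)"
proof -
  have at: "at r within {0..A} = at r" using r by (intro at_within_interior) auto
  have I: "((\<lambda>r. integral {0..r} (\<lambda>t. t ^ (N - 1) * g t)) has_real_derivative r ^ (N - 1) * g r) (at r)"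
  proof -
    have "continuous_on {0..A} (\<lambda>t. t ^ (N - 1) * g t)" by (intro continuous_intros g)
    then show ?thesis using integral_has_real_derivative[of 0 A _ r] r unfolding at by auto
  qed
  obtain k where k: "N = Suc (Suc k)" using N by (metis add_2_eq_Suc le_Suc_ex)
  have "(F has_real_derivative
      (r ^ (N - 1) * g r * r ^ (N - 1) - integral {0..r} (\<lambda>t. t ^ (N - 1) * g t) * (real (N - 1) * r ^ (N - 1 - Suc 0)))
        / (r ^ (N - 1) * r ^ (N - 1))) (at r)"
    unfolding F_def using r by (intro DERIV_divide I DERIV_pow) auto
  moreover have "(r ^ (N - 1) * g r * r ^ (N - 1) - integral {0..r} (\<lambda>t. t ^ (N - 1) * g t) * (real (N - 1) * r ^ (N - 1 - Suc 0)))
        / (r ^ (N - 1) * r ^ (N - 1)) = g r - (real N - 1) / r * F r"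
    unfolding F_def k using r by (simp add: field_simps)
  ultimately show ?thesis by simp
qed

lemma radial_potential_flat_at_0:
  assumes g: "continuous_on {0..A} g" and N: "2 \<le> N" and B: "\<And>t. t \<in> {0..A} \<Longrightarrow> \<bar>g t\<bar> \<le> B"
  shows "(radial_potential N g has_real_derivative 0) (at 0 within {0..A})"
proof -
  have "((\<lambda>y. (radial_potential N g y - radial_potential N g 0) / (y - 0)) \<longlongrightarrow> 0) (at 0 within {0..A})"
  proof (rule Lim_null_comparison)
    have "\<bar>radial_potential N g y / y\<bar> \<le> B * y / 2" if "y \<in> {0..A}" "y \<noteq> 0" for y
      using abs_radial_potential_le_square[OF continuous_on_subset[OF g] _ N B, of y] that
      by (auto simp: abs_divide divide_le_eq power2_eq_square)
    then show "eventually (\<lambda>y. norm ((radial_potential N g y - radial_potential N g 0) / (y - 0)) \<le> B * y / 2)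
        (at 0 within {0..A})"
      by (auto simp: eventually_at_filter)
    show "((\<lambda>y. B * y / 2) \<longlongrightarrow> 0) (at 0 within {0..A})" by (auto intro!: tendsto_eq_intros)
  qed
  then show ?thesis by (simp add: has_field_derivative_iff)
qed

section \<open>Existence\<close>

text \<open>The fixed point of the truncated problem solves the truncated ODE, and the lower bound \<open>\<epsilon>\<^sup>p\<close> of the
  truncated nonlinearity forces \<open>u'(r) \<le> -c \<epsilon>\<^sup>p r / N\<close>.\<close>
lemma truncated_lane_emden_fixed_point:
  assumes N: "3 \<le> N" and c: "0 < c" and p: "0 < p" and \<epsilon>: "0 < \<epsilon>" "\<epsilon> < 1" and A: "0 < A"
  obtains u D where "continuous_on {0..A} u" "u 0 = 1" "(u has_real_derivative 0) (at 0 within {0..A})"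
    "\<And>r. r \<in> {0<..<A} \<Longrightarrow> (u has_real_derivative D r) (at r)"
    "\<And>r. r \<in> {0<..<A} \<Longrightarrow> (D has_real_derivative - c * clamped_powr \<epsilon> p (u r) - (real N - 1) / r * D r) (at r)"
    "\<And>r. r \<in> {0<..<A} \<Longrightarrow> D r \<le> - c * \<epsilon> powr p * r / real N"
proof -
  have clamped_cont: "continuous_on UNIV (clamped_powr \<epsilon> p)" using \<epsilon> by (intro continuous_on_clamped_powr)
  have clamped_lip: "\<bar>clamped_powr \<epsilon> p x - clamped_powr \<epsilon> p y\<bar> \<le> p * (\<epsilon> powr (p - 1) + 1) * \<bar>x - y\<bar>" for x y
    using \<epsilon> p by (intro clamped_powr_lipschitz) auto
  obtain u where u_cont: "continuous_on {0..A} u" and u_eq: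
    "\<And>r. r \<in> {0..A} \<Longrightarrow> u r = 1 - c / (real N - 2) * radial_potential N (\<lambda>t. clamped_powr \<epsilon> p (u t)) r"
    using radial_integral_equation_solvable[OF N clamped_cont clamped_lip less_imp_le[OF A], where c = c]
    by blast
  define g where "g t = clamped_powr \<epsilon> p (u t)" for t
  have g_cont: "continuous_on {0..A} g"
    unfolding g_def by (intro continuous_on_compose2[OF continuous_on_clamped_powr u_cont]) (use \<epsilon> in auto)
  have g_bounds: "\<epsilon> powr p \<le> g t" "\<bar>g t\<bar> \<le> 1" for t
  proof -
    have "\<epsilon> powr p \<le> g t" "g t \<le> 1" "0 \<le> \<epsilon> powr p"
      unfolding g_def using clamped_powr_bounds[of \<epsilon> p] \<epsilon> p by auto
    then show "\<epsilon> powr p \<le> g t" "\<bar>g t\<bar> \<le> 1" by linarith+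
  qed
  have u_eq_g: "u r = 1 - c / (real N - 2) * radial_potential N g r" if "r \<in> {0..A}" for r
    using u_eq[OF that] unfolding g_def[abs_def] .
  define D where "D r = - c * (integral {0..r} (\<lambda>t. t ^ (N - 1) * g t) / r ^ (N - 1))" for r
  show ?thesis
  proof (rule that[of u D])
    show "continuous_on {0..A} u" "u 0 = 1" by (fact u_cont) (use u_eq[of 0] A in simp)
    have "((\<lambda>r. 1 - c / (real N - 2) * radial_potential N g r) has_real_derivative 0) (at 0 within {0..A})"
      using radial_potential_flat_at_0[OF g_cont _ g_bounds(2)] N by (auto intro!: derivative_eq_intros)
    then show "(u has_real_derivative 0) (at 0 within {0..A})"
      by (rule has_field_derivative_transform_within[OF _ zero_less_one]) (use A u_eq_g in auto)
    fix r assume r: "r \<in> {0<..<A}"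
    have "((\<lambda>r. 1 - c / (real N - 2) * radial_potential N g r) has_real_derivative D r) (at r)"
      using has_real_derivative_radial_potential[OF g_cont N r] N unfolding D_def
      by (auto intro!: derivative_eq_intros)
    then show "(u has_real_derivative D r) (at r)"
      by (rule has_field_derivative_transform_within_open[where S = "{0<..<A}"]) (use r u_eq_g in auto)
    have "(D has_real_derivative - c * (g r - (real N - 1) / r * (integral {0..r} (\<lambda>t. t ^ (N - 1) * g t) / r ^ (N - 1)))) (at r)"
      unfolding D_def[abs_def] using has_real_derivative_mean_flux[OF g_cont _ r] N by (intro DERIV_cmult) auto
    then show "(D has_real_derivative - c * clamped_powr \<epsilon> p (u r) - (real N - 1) / r * D r) (at r)"
      by (elim DERIV_cong) (use r in \<open>simp add: D_def g_def field_simps\<close>)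
    have "\<epsilon> powr p * r ^ N / real N \<le> integral {0..r} (\<lambda>t. t ^ (N - 1) * g t)"
      using r N g_bounds by (intro integral_power_weight_ge continuous_on_subset[OF g_cont]) auto
    moreover have "r ^ N = r * r ^ (N - 1)" using N by (simp add: power_eq_if)
    ultimately have "\<epsilon> powr p * r / real N \<le> integral {0..r} (\<lambda>t. t ^ (N - 1) * g t) / r ^ (N - 1)"
      using r by (simp add: pos_le_divide_eq algebra_simps)
    then have "c * (\<epsilon> powr p * r / real N) \<le> c * (integral {0..r} (\<lambda>t. t ^ (N - 1) * g t) / r ^ (N - 1))"
      using c by (intro mult_left_mono) auto
    then show "D r \<le> - c * \<epsilon> powr p * r / real N" unfolding D_def by simp
  qed
qed

text \<open>For \<open>A\<close> large the truncated solution drops below \<open>\<epsilon>\<close>; up to the first radius where it equals \<open>\<epsilon>\<close>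
  the truncation is inactive.\<close>
lemma truncated_lane_emden_exists:
  assumes N: "3 \<le> N" and c: "0 < c" and p: "0 < p" and \<epsilon>: "0 < \<epsilon>" "\<epsilon> < 1"
  obtains r u where "lane_emden_positive_on N c p 1 r u" "u r = \<epsilon>" "\<And>t. t \<in> {0..r} \<Longrightarrow> \<epsilon> \<le> u t"
proof -
  define A where "A = sqrt (2 * real N / (c * \<epsilon> powr p)) + 1"
  have A: "0 < A" "2 * real N < c * \<epsilon> powr p * A\<^sup>2"
  proof -
    show "0 < A" unfolding A_def using c \<epsilon> by (intro add_nonneg_pos) auto
    have "0 < 2 * real N / (c * \<epsilon> powr p)" using N c \<epsilon> by auto
    then have "2 * real N / (c * \<epsilon> powr p) < A\<^sup>2"
      unfolding A_def by (smt (verit) real_sqrt_pow2 power_strict_mono real_sqrt_ge_zero zero_less_numeral)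
    moreover have "0 < c * \<epsilon> powr p" using c \<epsilon> by simp
    ultimately show "2 * real N < c * \<epsilon> powr p * A\<^sup>2" by (simp add: pos_divide_less_eq mult.commute)
  qed
  obtain u D where u_cont: "continuous_on {0..A} u" and u0: "u 0 = 1"
    and flat: "(u has_real_derivative 0) (at 0 within {0..A})"
    and u_deriv: "\<And>r. r \<in> {0<..<A} \<Longrightarrow> (u has_real_derivative D r) (at r)"
    and D_deriv: "\<And>r. r \<in> {0<..<A} \<Longrightarrow> (D has_real_derivative - c * clamped_powr \<epsilon> p (u r) - (real N - 1) / r * D r) (at r)"
    and D_le: "\<And>r. r \<in> {0<..<A} \<Longrightarrow> D r \<le> - c * \<epsilon> powr p * r / real N"
    using truncated_lane_emden_fixed_point[OF N c p \<epsilon> A(1)] by blast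
  have u_decreasing: "u y < u x" if "0 \<le> x" "x < y" "y \<le> A" for x y
  proof (rule DERIV_neg_imp_decreasing_open[of x y u])
    fix z assume "x < z" "z < y"
    then have "z \<in> {0<..<A}" using that by auto
    then show "\<exists>d. (u has_real_derivative d) (at z) \<and> d < 0"
      using u_deriv D_le[of z] c \<epsilon> N by (intro exI conjI) (auto intro: le_less_trans)
  qed (use that continuous_on_subset[OF u_cont] in auto)
  have "u A \<le> u 0 - c * \<epsilon> powr p / real N * A\<^sup>2 / 2"
    using D_le A(1) by (intro quadratic_decrease_from_derivative[OF u_cont _ u_deriv]) (auto simp: field_simps)
  moreover have "1 < c * \<epsilon> powr p * A\<^sup>2 / (2 * real N)" using A N by (simp add: field_simps)
  ultimately have "u A < \<epsilon>" using \<epsilon> u0 by (simp add: field_simps)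
  then obtain r where r: "0 \<le> r" "r \<le> A" "u r = \<epsilon>"
    using IVT2'[of u A \<epsilon> 0] u0 \<epsilon> A u_cont by auto
  then have "0 < r" "r < A" using u0 \<epsilon> \<open>u A < \<epsilon>\<close> by (auto simp: less_le)
  have u_ge: "\<epsilon> \<le> u t" if "t \<in> {0..r}" for t
    using u_decreasing[of t r] r that by (cases "t = r") auto
  have u_le: "u t \<le> 1" if "t \<in> {0..A}" for t
    using u_decreasing[of 0 t] u0 that by (cases "t = 0") auto
  have "lane_emden_positive_on N c p 1 r u"
    unfolding lane_emden_positive_on_def lane_emden_ode_def
  proof (intro conjI exI ballI)
    show "continuous_on {0..r} u" using \<open>r < A\<close> by (intro continuous_on_subset[OF u_cont]) auto
    show "(u has_real_derivative 0) (at 0 within {0..r})"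
      using flat by (rule has_field_derivative_subset) (use \<open>r < A\<close> in auto)
    fix \<rho> assume \<rho>: "\<rho> \<in> {0<..<r}"
    then have \<rho>A: "\<rho> \<in> {0<..<A}" using \<open>r < A\<close> by auto
    show "(u has_real_derivative D \<rho>) (at \<rho>)" by (rule u_deriv[OF \<rho>A])
    have "clamped_powr \<epsilon> p (u \<rho>) = u \<rho> powr p" using u_ge u_le \<rho> \<open>r < A\<close> by (intro clamped_powr_eq) auto
    then show "(D has_real_derivative (- c * u \<rho> powr p - (real N - 1) / \<rho> * D \<rho>)) (at \<rho>)"
      using D_deriv[OF \<rho>A] by simp
  qed (use \<open>0 < r\<close> u0 u_ge \<epsilon> in \<open>auto intro: less_le_trans\<close>)
  then show ?thesis using that r u_ge by blast
qed

lemma lane_emden_positive_on_nested: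
  assumes sol1: "lane_emden_positive_on N c p \<alpha> R1 u1" and sol2: "lane_emden_positive_on N c p \<alpha> R2 u2"
    and less: "u2 R2 < u1 R1" and c: "0 < c" and N: "2 \<le> N" and p: "0 < p"
  shows "R1 < R2" "\<And>t. t \<in> {0..R1} \<Longrightarrow> u2 t = u1 t"
proof -
  define b where "b = min R1 R2"
  have b: "0 < b" "b \<le> R1" "b \<le> R2"
    using sol1 sol2 unfolding b_def lane_emden_positive_on_def by auto
  have agree: "u1 t = u2 t" if "t \<in> {0..b}" for t
    using lane_emden_positive_on_unique[OF lane_emden_positive_on_subset[OF sol1 b(1,2)]
        lane_emden_positive_on_subset[OF sol2 b(1,3)] c N p that] .
  show "R1 < R2"
  proof (rule ccontr)
    assume "\<not> R1 < R2"
    then have "b = R2" unfolding b_def by auto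
    then have "u1 R1 \<le> u1 R2"
      using lane_emden_antimono[OF sol1 _ N, of R2 R1] c b by auto
    then show False using agree[of R2] \<open>b = R2\<close> b less by auto
  qed
  then show "u2 t = u1 t" if "t \<in> {0..R1}" for t using agree[of t] that unfolding b_def by auto
qed

lemma lane_emden_nested_union:
  fixes R :: "nat \<Rightarrow> real"
  assumes sol: "\<And>n. lane_emden_positive_on N c p \<alpha> (R n) (U n)" and mono: "strict_mono R"
    and agree: "\<And>n m t. n \<le> m \<Longrightarrow> t \<in> {0..R n} \<Longrightarrow> U m t = U n t"
  obtains \<Psi> where "\<And>n. lane_emden_positive_on N c p \<alpha> (R n) \<Psi>"
    "\<And>n t. t \<in> {0..R n} \<Longrightarrow> \<Psi> t = U n t" "\<And>t. (\<And>n. R n \<le> t) \<Longrightarrow> \<Psi> t = 0"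
proof -
  define \<Psi> where "\<Psi> t = (if \<exists>n. t < R n then U (LEAST n. t < R n) t else 0)" for t
  have \<Psi>: "\<Psi> t = U n t" if t: "t \<in> {0..R n}" for n t
  proof -
    have ex: "\<exists>m. t < R m" using t strict_monoD[OF mono, of n "Suc n"] by (intro exI[of _ "Suc n"]) auto
    define k where "k = (LEAST n. t < R n)"
    have "t < R k" unfolding k_def using ex by (rule LeastI_ex)
    then have "U k t = U n t" using agree[of k n t] agree[of n k t] t by (cases "k \<le> n") auto
    then show ?thesis using ex unfolding \<Psi>_def k_def by simp
  qed
  show ?thesis
  proof (rule that)
    show "lane_emden_positive_on N c p \<alpha> (R n) \<Psi>" for n
      using \<Psi> by (intro lane_emden_positive_on_cong[OF sol]) auto
    show "\<Psi> t = U n t" if "t \<in> {0..R n}" for n t using \<Psi> that .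
    show "\<Psi> t = 0" if "\<And>n. R n \<le> t" for t using that unfolding \<Psi>_def by (meson not_less)
  qed
qed

lemma lane_emden_union_continuous:
  fixes R :: "nat \<Rightarrow> real"
  assumes sol: "\<And>n. lane_emden_positive_on N c p \<alpha> (R n) \<Psi>" and mono: "strict_mono R"
    and bdd: "bdd_above (range R)" and beyond: "\<And>t. (\<And>n. R n \<le> t) \<Longrightarrow> \<Psi> t = 0"
    and lim: "(\<lambda>n. \<Psi> (R n)) \<longlonglongrightarrow> 0" and c: "0 \<le> c" and N: "2 \<le> N"
  shows "continuous_on {0..Sup (range R)} \<Psi>"
  unfolding continuous_on_eq_continuous_within
proof
  define Rs where "Rs = Sup (range R)"
  have R_less: "R n < Rs" for n
    using strict_monoD[OF mono, of n "Suc n"] cSup_upper[OF _ bdd, of "R (Suc n)"] unfolding Rs_def by auto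
  have ex: "\<exists>n. t < R n" if "t < Rs" for t
    using that less_cSUP_iff[OF _ bdd, of t] unfolding Rs_def by auto
  have R_pos: "0 < R n" for n using sol[of n] unfolding lane_emden_positive_on_def by auto
  fix x assume x: "x \<in> {0..Sup (range R)}"
  show "continuous (at x within {0..Sup (range R)}) \<Psi>"
  proof (cases "x < Rs")
    case True
    then obtain n where n: "x < R n" using ex by blast
    have "at x within {0..Rs} = at x within {0..R n}"
      using n R_less[of n] by (intro at_within_nhd[where S = "{..<R n}"]) auto
    moreover have "continuous_on {0..R n} \<Psi>"
      using sol[of n] unfolding lane_emden_positive_on_def lane_emden_ode_def by auto
    ultimately show ?thesis
      using x n unfolding continuous_on_eq_continuous_within continuous_within Rs_def[symmetric] by auto
  next
    case False
    then have "x = Rs" using x unfolding Rs_def by auto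
    have "(\<Psi> \<longlongrightarrow> 0) (at Rs within {0..Rs})"
    proof (rule tendstoI)
      fix \<eta> :: real assume "0 < \<eta>"
      then have "eventually (\<lambda>n. \<Psi> (R n) < \<eta>) sequentially" using lim by (intro order_tendstoD(2))
      then obtain n where n: "\<Psi> (R n) < \<eta>" by (auto simp: eventually_sequentially)
      have "dist (\<Psi> y) 0 < \<eta>" if "y \<in> {0..Rs}" "y \<noteq> Rs" "dist y Rs < Rs - R n" for y
      proof -
        have y: "R n < y" "y < Rs" using that by (auto simp: dist_real_def)
        then obtain m where "y < R m" using ex by blast
        then have "0 < \<Psi> y" "\<Psi> y \<le> \<Psi> (R n)"
          using sol[of m] lane_emden_antimono[OF sol[of m] c N, of "R n" y] y R_pos[of n]
          unfolding lane_emden_positive_on_def by auto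
        then show ?thesis using n by (auto simp: dist_real_def)
      qed
      then show "eventually (\<lambda>y. dist (\<Psi> y) 0 < \<eta>) (at Rs within {0..Rs})"
        unfolding eventually_at using R_less[of n] by (intro exI[of _ "Rs - R n"]) auto
    qed
    then show ?thesis
      using \<open>x = Rs\<close> beyond[of Rs] R_less unfolding Rs_def by (simp add: continuous_within less_imp_le)
  qed
qed

lemma lane_emden_solution_from_union:
  fixes R :: "nat \<Rightarrow> real"
  assumes sol: "\<And>n. lane_emden_positive_on N c p \<alpha> (R n) \<Psi>" and mono: "strict_mono R"
    and bdd: "bdd_above (range R)" and beyond: "\<And>t. (\<And>n. R n \<le> t) \<Longrightarrow> \<Psi> t = 0"
    and lim: "(\<lambda>n. \<Psi> (R n)) \<longlonglongrightarrow> 0" and c: "0 \<le> c" and N: "2 \<le> N"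
  shows "lane_emden_solution N c p \<alpha> (Sup (range R)) \<Psi>"
proof -
  define Rs where "Rs = Sup (range R)"
  have R_less: "R n < Rs" for n
    using strict_monoD[OF mono, of n "Suc n"] cSup_upper[OF _ bdd, of "R (Suc n)"] unfolding Rs_def by auto
  have ex: "\<exists>n. t < R n" if "t < Rs" for t
    using that less_cSUP_iff[OF _ bdd, of t] unfolding Rs_def by auto
  have R0: "0 < R 0" using sol[of 0] unfolding lane_emden_positive_on_def by auto
  have pos: "0 < \<Psi> t" if t: "0 \<le> t" "t < Rs" for t
  proof -
    obtain n where "t < R n" using ex t by blast
    then show ?thesis using sol[of n] t unfolding lane_emden_positive_on_def by auto
  qed
  have "at 0 within {0..Rs} = at 0 within {0..R 0}"
    using R0 R_less[of 0] by (intro at_within_nhd[where S = "{..<R 0}"]) auto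
  then have "(\<Psi> has_real_derivative 0) (at 0 within {0..Rs})"
    using sol[of 0] unfolding lane_emden_positive_on_def lane_emden_ode_def by simp
  moreover have "(\<Psi> has_real_derivative deriv \<Psi> r) (at r) \<and>
      (deriv \<Psi> has_real_derivative (- c * \<Psi> r powr p - (real N - 1) / r * deriv \<Psi> r)) (at r)"
    if r: "r \<in> {0<..<Rs}" for r
  proof -
    obtain n where "r < R n" using ex r by auto
    then show ?thesis using r sol[of n] lane_emden_ode_deriv unfolding lane_emden_positive_on_def by auto
  qed
  moreover have "0 < Rs" using R0 R_less[of 0] by simp
  moreover have "\<Psi> Rs = 0" using beyond[of Rs] R_less less_imp_le by blast
  ultimately show ?thesis
    using sol[of 0] pos lane_emden_union_continuous[OF assms]
    unfolding lane_emden_solution_def lane_emden_ode_def lane_emden_positive_on_def Rs_def[symmetric]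
    by (auto intro!: exI[of _ "deriv \<Psi>"] less_imp_le)
qed

text \<open>Truncated solutions down to the levels \<open>1/(n+2)\<close> are nested; their union is a positive solution
  on an interval that is bounded, as no positive solution exists on all of \<open>[0,\<infinity>)\<close>.\<close>
theorem lane_emden_solution_exists:
  assumes N: "3 \<le> N" and c: "0 < c" and p: "0 < p" "p < real N / (real N - 2)"
  obtains R \<psi> where "lane_emden_solution N c p 1 R \<psi>"
proof -
  define \<epsilon> where "\<epsilon> n = 1 / (real n + 2)" for n :: nat
  have "\<exists>R U. lane_emden_positive_on N c p 1 R U \<and> U R = \<epsilon> n" for n
  proof -
    have "0 < \<epsilon> n" "\<epsilon> n < 1" unfolding \<epsilon>_def by auto
    then show ?thesis using truncated_lane_emden_exists[OF N c p(1), of "\<epsilon> n"] by metis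
  qed
  then obtain R U where sol: "\<And>n. lane_emden_positive_on N c p 1 (R n) (U n)" and level: "\<And>n. U n (R n) = \<epsilon> n"
    by metis
  have nested: "R n < R m" "\<And>t. t \<in> {0..R n} \<Longrightarrow> U m t = U n t" if "n < m" for n m
    using lane_emden_positive_on_nested[OF sol[of n] sol[of m] _ c _ p(1)] level that N
    unfolding \<epsilon>_def by (auto simp: frac_less2)
  have mono: "strict_mono R" using nested(1) by (rule strict_monoI)
  obtain \<Psi> where \<Psi>: "\<And>n. lane_emden_positive_on N c p 1 (R n) \<Psi>" "\<And>n t. t \<in> {0..R n} \<Longrightarrow> \<Psi> t = U n t"
    "\<And>t. (\<And>n. R n \<le> t) \<Longrightarrow> \<Psi> t = 0"
    using lane_emden_nested_union[OF sol mono] nested(2) by (metis le_eq_less_or_eq)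
  have "bdd_above (range R)"
  proof (rule ccontr)
    assume unbounded: "\<not> bdd_above (range R)"
    have "lane_emden_positive_on N c p 1 b \<Psi>" if "0 < b" for b
    proof -
      obtain n where "b < R n" using unbounded by (meson bdd_above.I2 linorder_not_le)
      then show ?thesis using lane_emden_positive_on_subset[OF \<Psi>(1) that, of n] by simp
    qed
    then show False using no_global_lane_emden[OF N c p] by blast
  qed
  moreover have "(\<lambda>n. \<Psi> (R n)) \<longlonglongrightarrow> 0"
  proof -
    have "(\<lambda>n. 1 / (real n + 2)) \<longlonglongrightarrow> 0"
      using LIMSEQ_Suc[OF LIMSEQ_Suc[OF lim_inverse_n']] by (simp add: add.commute)
    moreover have "\<Psi> (R n) = 1 / (real n + 2)" for n
      using \<Psi>(2)[of "R n" n] level[of n] sol[of n] unfolding \<epsilon>_def lane_emden_positive_on_def by auto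
    ultimately show ?thesis by simp
  qed
  ultimately show ?thesis
    using lane_emden_solution_from_union[OF \<Psi>(1) mono _ \<Psi>(3)] that c N by auto
qed

section \<open>Scaling and mass\<close>

lemma lane_emden_ode_scale:
  assumes ode: "lane_emden_ode N c p b \<psi>" and q: "0 < q" and \<mu>: "0 < \<mu>" and scale: "q * \<mu>\<^sup>2 = q powr p"
  shows "lane_emden_ode N c p (b / \<mu>) (\<lambda>r. q * \<psi> (\<mu> * r))"
proof -
  have img: "(\<lambda>r. \<mu> * r) ` {0..b / \<mu>} = {0..b}"
    using image_mult_atLeastAtMost[OF \<mu>, of 0 "b / \<mu>"] \<mu> by simp
  have cont: "continuous_on {0..b} \<psi>" and d0: "(\<psi> has_real_derivative 0) (at 0 within {0..b})"
    using ode unfolding lane_emden_ode_def by auto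
  have "continuous_on {0..b / \<mu>} (\<lambda>r. q * \<psi> (\<mu> * r))"
    using img by (intro continuous_intros continuous_on_compose2[OF cont]) auto
  moreover have "((\<lambda>r. q * \<psi> (\<mu> * r)) has_real_derivative 0) (at 0 within {0..b / \<mu>})"
    using DERIV_image_chain[of \<psi> 0 "\<lambda>r. \<mu> * r" 0 "{0..b / \<mu>}" \<mu>] d0 img
    by (auto intro!: derivative_eq_intros simp: o_def)
  moreover have "((\<lambda>r. q * \<psi> (\<mu> * r)) has_real_derivative q * \<mu> * deriv \<psi> (\<mu> * r)) (at r) \<and>
      ((\<lambda>r. q * \<mu> * deriv \<psi> (\<mu> * r)) has_real_derivative
        (- c * (q * \<psi> (\<mu> * r)) powr p - (real N - 1) / r * (q * \<mu> * deriv \<psi> (\<mu> * r)))) (at r)"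
    if r: "r \<in> {0<..<b / \<mu>}" for r
  proof
    have "\<mu> * r \<in> {0<..<b}" using r \<mu> by (auto simp: field_simps)
    note d = lane_emden_ode_deriv[OF ode this]
    have scaling: "((\<lambda>r. \<mu> * r) has_real_derivative \<mu>) (at r)" by (auto intro!: derivative_eq_intros)
    show "((\<lambda>r. q * \<psi> (\<mu> * r)) has_real_derivative q * \<mu> * deriv \<psi> (\<mu> * r)) (at r)"
      using DERIV_cmult[OF DERIV_chain2[OF d(1) scaling], of q] by (simp add: ac_simps)
    have "((\<lambda>r. q * \<mu> * deriv \<psi> (\<mu> * r)) has_real_derivative
        q * \<mu> * ((- c * \<psi> (\<mu> * r) powr p - (real N - 1) / (\<mu> * r) * deriv \<psi> (\<mu> * r)) * \<mu>)) (at r)"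
      using DERIV_cmult[OF DERIV_chain2[OF d(2) scaling], of "q * \<mu>"] by simp
    moreover have "q * \<mu> * ((- c * \<psi> (\<mu> * r) powr p - (real N - 1) / (\<mu> * r) * deriv \<psi> (\<mu> * r)) * \<mu>) =
        - c * (q * \<psi> (\<mu> * r)) powr p - (real N - 1) / r * (q * \<mu> * deriv \<psi> (\<mu> * r))"
      using r \<mu> q scale by (simp add: powr_mult power2_eq_square field_simps)
    ultimately show "((\<lambda>r. q * \<mu> * deriv \<psi> (\<mu> * r)) has_real_derivative
        (- c * (q * \<psi> (\<mu> * r)) powr p - (real N - 1) / r * (q * \<mu> * deriv \<psi> (\<mu> * r)))) (at r)"
      by simp
  qed
  ultimately show ?thesis
    unfolding lane_emden_ode_def by (intro conjI exI[of _ "\<lambda>r. q * \<mu> * deriv \<psi> (\<mu> * r)"]) auto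
qed

lemma lane_emden_solution_scale:
  assumes sol: "lane_emden_solution N c p \<alpha> R \<psi>" and q: "0 < q"
  shows "lane_emden_solution N c p (q * \<alpha>) (R / q powr ((p - 1) / 2)) (\<lambda>r. q * \<psi> (q powr ((p - 1) / 2) * r))"
proof -
  define \<mu> where "\<mu> = q powr ((p - 1) / 2)"
  have \<mu>: "0 < \<mu>" unfolding \<mu>_def using q by simp
  have "\<mu> * \<mu> = q powr (p - 1)" unfolding \<mu>_def by (simp add: powr_add[symmetric])
  then have "q * \<mu>\<^sup>2 = q powr p" using q by (simp add: power2_eq_square powr_mult_base)
  then have "lane_emden_ode N c p (R / \<mu>) (\<lambda>r. q * \<psi> (\<mu> * r))"
    using sol q \<mu> by (intro lane_emden_ode_scale) (auto simp: lane_emden_solution_def)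
  moreover have "0 < q * \<psi> (\<mu> * r)" if "r \<in> {0..<R / \<mu>}" for r
    using sol q \<mu> that unfolding lane_emden_solution_def by (auto simp: field_simps)
  ultimately show ?thesis
    using sol q \<mu> unfolding lane_emden_solution_def \<mu>_def[symmetric] by auto
qed

lemma lane_emden_solution_unique:
  assumes sol1: "lane_emden_solution N c p \<alpha> R1 \<psi>1" and sol2: "lane_emden_solution N c p \<alpha> R2 \<psi>2"
    and c: "0 < c" and N: "2 \<le> N" and p: "0 < p"
  shows "R1 = R2" "\<And>r. r \<in> {0..R1} \<Longrightarrow> \<psi>1 r = \<psi>2 r"
proof -
  define m where "m = min R1 R2"
  have m: "0 < m" "m \<le> R1" "m \<le> R2" using sol1 sol2 unfolding m_def lane_emden_solution_def by auto
  have below: "\<psi>1 t = \<psi>2 t" if t: "0 \<le> t" "t < m" for t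
  proof -
    define b where "b = max t (m / 2)"
    have b: "0 < b" "b < R1" "b < R2" "t \<le> b" unfolding b_def using t m by auto
    show ?thesis
      using lane_emden_positive_on_unique[OF lane_emden_solution_positive_on[OF sol1 b(1,2)]
          lane_emden_solution_positive_on[OF sol2 b(1,3)] c N p] t b by auto
  qed
  have "continuous_on {0..m} \<psi>1" "continuous_on {0..m} \<psi>2"
    using sol1 sol2 m unfolding lane_emden_solution_def lane_emden_ode_def
    by (auto elim!: continuous_on_subset)
  then have "(\<psi>1 \<longlongrightarrow> \<psi>1 m) (at_left m)" "(\<psi>2 \<longlongrightarrow> \<psi>2 m) (at_left m)"
    using m(1) unfolding continuous_on_def at_within_Icc_at_left[OF m(1), symmetric] by auto
  moreover have "eventually (\<lambda>t. \<psi>2 t = \<psi>1 t) (at_left m)"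
    using eventually_at_left_real[OF m(1)] by eventually_elim (use below in auto)
  ultimately have at_m: "\<psi>1 m = \<psi>2 m"
    using tendsto_cong tendsto_unique trivial_limit_at_left_real by metis
  show "R1 = R2"
  proof (rule ccontr)
    assume "R1 \<noteq> R2"
    then have "\<psi>1 m = 0 \<and> 0 < \<psi>2 m \<or> \<psi>2 m = 0 \<and> 0 < \<psi>1 m"
      using sol1 sol2 m unfolding m_def lane_emden_solution_def by (auto simp: min_def)
    then show False using at_m by auto
  qed
  then show "\<psi>1 r = \<psi>2 r" if "r \<in> {0..R1}" for r
    using below[of r] at_m that unfolding m_def by (cases "r = R1") auto
qed

lemma continuous_on_lane_emden_mass_density:
  assumes sol: "lane_emden_solution N c p \<alpha> R \<psi>" and p: "0 < p"
  shows "continuous_on {0..R} (\<lambda>s. \<psi> s powr p * s ^ (N - 1))"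
proof -
  have "continuous_on {0..R} \<psi>" "\<forall>s\<in>{0..R}. 0 \<le> \<psi> s"
    using sol unfolding lane_emden_solution_def lane_emden_ode_def
    by (auto simp: le_less)
  then have "continuous_on {0..R} (\<lambda>s. \<psi> s powr p)"
    using p by (intro continuous_on_powr') (auto intro: continuous_on_const)
  then show ?thesis by (rule continuous_on_mult) (intro continuous_intros)
qed

lemma lane_emden_mass_pos:
  assumes sol: "lane_emden_solution N c p \<alpha> R \<psi>" and c: "0 < c" and N: "2 \<le> N" and p: "0 < p"
  shows "0 < integral {0..R} (\<lambda>s. \<psi> s powr p * s ^ (N - 1))"
proof -
  have R: "0 < R" using sol unfolding lane_emden_solution_def by auto
  have sol': "lane_emden_positive_on N c p \<alpha> (R / 2) \<psi>" using lane_emden_solution_positive_on[OF sol] R by auto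
  then have "0 < \<psi> (R / 2)" using R unfolding lane_emden_positive_on_def by auto
  then have "0 < \<psi> (R / 2) powr p * (R / 2) ^ N / real N" using R N by simp
  also have "\<dots> \<le> radial_mass N p \<psi> (R / 2)"
    using radial_mass_lower_bound[OF sol'] c N p R by auto
  also have "\<dots> \<le> integral {0..R} (\<lambda>s. \<psi> s powr p * s ^ (N - 1))"
    unfolding radial_mass_def mult.commute[of "_ ^ (N - 1)"] using R
    by (intro integral_Icc_mono_right continuous_on_lane_emden_mass_density[OF sol p]) auto
  finally show ?thesis .
qed

text \<open>By scaling and uniqueness, the solution with \<open>\<psi>(0) = \<alpha>\<close> is \<open>\<alpha> \<psi>\<^sub>1(\<alpha>\<^sup>(\<^sup>p\<^sup>-\<^sup>1\<^sup>)\<^sup>/\<^sup>2 r)\<close>.\<close>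
lemma lane_emden_mass_homogeneous:
  assumes sol1: "lane_emden_solution N c p 1 R1 \<psi>1" and sol: "lane_emden_solution N c p \<alpha> R \<psi>"
    and \<alpha>: "0 < \<alpha>" and c: "0 < c" and N: "2 \<le> N" and p: "0 < p"
  shows "integral {0..R} (\<lambda>s. \<psi> s powr p * s ^ (N - 1)) =
    \<alpha> powr (p - real N * (p - 1) / 2) * integral {0..R1} (\<lambda>s. \<psi>1 s powr p * s ^ (N - 1))"
proof -
  define \<mu> where "\<mu> = \<alpha> powr ((p - 1) / 2)"
  have \<mu>: "0 < \<mu>" unfolding \<mu>_def using \<alpha> by simp
  define F where "F s = \<psi>1 s powr p * s ^ (N - 1)" for s
  have scaled: "lane_emden_solution N c p \<alpha> (R1 / \<mu>) (\<lambda>r. \<alpha> * \<psi>1 (\<mu> * r))"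
    using lane_emden_solution_scale[OF sol1 \<alpha>] unfolding \<mu>_def by simp
  have F_cont: "continuous_on {0..R1} F" unfolding F_def by (rule continuous_on_lane_emden_mass_density[OF sol1 p])
  have R: "R = R1 / \<mu>" and \<psi>: "\<And>s. s \<in> {0..R} \<Longrightarrow> \<psi> s = \<alpha> * \<psi>1 (\<mu> * s)"
    using lane_emden_solution_unique[OF sol scaled c N p] by auto
  have "integral {0..R} (\<lambda>s. \<psi> s powr p * s ^ (N - 1)) = integral {0..R1 / \<mu>} (\<lambda>s. \<alpha> powr p / \<mu> ^ (N - 1) * F (\<mu> * s))"
    unfolding R[symmetric] using \<psi> \<alpha> \<mu>
    by (intro integral_cong) (simp add: F_def powr_mult power_mult_distrib field_simps)
  also have "\<dots> = \<alpha> powr p / \<mu> ^ (N - 1) * (integral {0..R1} F / \<mu>)"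
    using integral_rescale_0[OF F_cont \<mu>] by simp
  also have "\<dots> = \<alpha> powr p / \<mu> ^ N * integral {0..R1} F"
    using \<mu> N by (simp add: power_eq_if[of \<mu> N] field_simps)
  also have "\<alpha> powr p / \<mu> ^ N = \<alpha> powr (p - real N * (p - 1) / 2)"
    unfolding \<mu>_def using \<alpha> by (simp add: powr_realpow[symmetric] powr_powr powr_diff algebra_simps)
  finally show ?thesis unfolding F_def .
qed

lemma lane_emden_mass_ex1:
  assumes N: "3 \<le> N" and c: "0 < c" and p: "0 < p" "p < real N / (real N - 2)" and \<omega>: "0 < \<omega>" and M: "0 < M"
  shows "\<exists>!\<alpha>. \<alpha> > 0 \<and> (\<exists>R \<psi>. lane_emden_solution N c p \<alpha> R \<psi> \<and>
           \<omega> * integral {0..R} (\<lambda>s. \<psi> s powr p * s ^ (N - 1)) = M)"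
proof -
  define e where "e = p - real N * (p - 1) / 2"
  have "p * (real N - 2) < real N" using p(2) N by (simp add: field_simps)
  then have e: "0 < e" unfolding e_def by (simp add: algebra_simps)
  obtain R1 \<psi>1 where sol1: "lane_emden_solution N c p 1 R1 \<psi>1"
    using lane_emden_solution_exists[OF N c p] .
  define I where "I = \<omega> * integral {0..R1} (\<lambda>s. \<psi>1 s powr p * s ^ (N - 1))"
  have I: "0 < I" unfolding I_def using N \<omega> by (intro mult_pos_pos lane_emden_mass_pos[OF sol1 c _ p(1)]) auto
  have mass: "\<omega> * integral {0..R} (\<lambda>s. \<psi> s powr p * s ^ (N - 1)) = \<alpha> powr e * I"
    if "\<alpha> > 0" "lane_emden_solution N c p \<alpha> R \<psi>" for \<alpha> R \<psi>
    using lane_emden_mass_homogeneous[OF sol1 that(2,1) c _ p(1)] N unfolding I_def e_def by simp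
  show ?thesis
  proof (rule ex_ex1I)
    define \<alpha> where "\<alpha> = (M / I) powr (1 / e)"
    have \<alpha>: "0 < \<alpha>" "\<alpha> powr e = M / I" unfolding \<alpha>_def using M I e by (auto simp: powr_powr)
    obtain R \<psi> where "lane_emden_solution N c p \<alpha> R \<psi>" using lane_emden_solution_scale[OF sol1 \<alpha>(1)] by auto
    then show "\<exists>\<alpha>. \<alpha> > 0 \<and> (\<exists>R \<psi>. lane_emden_solution N c p \<alpha> R \<psi> \<and> \<omega> * integral {0..R} (\<lambda>s. \<psi> s powr p * s ^ (N - 1)) = M)"
      using mass[of \<alpha> R \<psi>] \<alpha> I by auto
  next
    fix \<alpha>1 \<alpha>2
    assume "\<alpha>1 > 0 \<and> (\<exists>R \<psi>. lane_emden_solution N c p \<alpha>1 R \<psi> \<and> \<omega> * integral {0..R} (\<lambda>s. \<psi> s powr p * s ^ (N - 1)) = M)"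
      and "\<alpha>2 > 0 \<and> (\<exists>R \<psi>. lane_emden_solution N c p \<alpha>2 R \<psi> \<and> \<omega> * integral {0..R} (\<lambda>s. \<psi> s powr p * s ^ (N - 1)) = M)"
    then have "\<alpha>1 powr e * I = M" "\<alpha>2 powr e * I = M" "0 < \<alpha>1" "0 < \<alpha>2" using mass by force+
    then have "\<alpha>1 powr e = \<alpha>2 powr e" using I by (metis mult_cancel_right less_irrefl)
    then have "(\<alpha>1 powr e) powr (1 / e) = (\<alpha>2 powr e) powr (1 / e)" by simp
    then show "\<alpha>1 = \<alpha>2" using e \<open>0 < \<alpha>1\<close> \<open>0 < \<alpha>2\<close> by (simp add: powr_powr)
  qed
qed

lemma sphere_area_pos: "0 < N \<Longrightarrow> 0 < sphere_area N"
  unfolding sphere_area_def by (intro divide_pos_pos mult_pos_pos Gamma_real_pos) auto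

theorem mainTheorem4:
  fixes N :: nat and m M :: real
  assumes "N \<ge> 3" and "m > 2 - 2 / real N" and "M > 0"
  shows "\<exists>!\<alpha>. \<alpha> > 0 \<and> (\<exists>R \<psi>. LE_solution N m \<alpha> R \<psi> \<and>
           sphere_area N * integral {0..R} (\<lambda>s. \<psi> s powr (1 / (m - 1)) * s ^ (N - 1)) = M)"
proof -
  have "2 / real N \<le> 2 / 3" using assms(1) by (intro divide_left_mono) auto
  then have m: "1 < m" using assms(2) by linarith
  have "(real N - 2) / real N < m - 1" using assms(1,2) by (simp add: field_simps)
  then have "1 / (m - 1) < real N / (real N - 2)" using m assms(1) by (simp add: field_simps)
  then show ?thesis
    unfolding LE_solution_iff using m assms by (intro lane_emden_mass_ex1 sphere_area_pos) auto
qed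

end
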